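(* Fix a formula $A$. Let $\Gamma\{-\}$ be an annotated unary context, $\Delta$ an annotated sequent, $\Sigma$ a finite set of formulas, and suppose $\vdash^A \Gamma\{[\Diamond A^\perp_\Sigma,\Delta]\}$. Let $B\in\Sigma$. If $\Delta$ contains (at any nesting depth) no bracket annotated with $B$, then $\vdash^A \Gamma\{[\Diamond A^\perp_{\Sigma'},\Diamond B^\perp,\Delta]\}$ for some $\Sigma'\subseteq\Sigma\setminus\{B\}$ (and some annotation on $\Diamond B^\perp$).
   Context: Formulas: over a countable set of atoms $\alpha$ with duals $\alpha^\perp$, $A,B ::= \alpha \mid \alpha^\perp \mid A\land B \mid A\lor B \mid \Box A \mid \Diamond A$; negation $A^\perp$ by De Morgan duality ($(\alpha)^\perp=\alpha^\perp$, $(\alpha^\perp)^\perp=\alpha$, $\land/\lor$ dual, $(\Box A)^\perp=\Diamond A^\perp$, $(\Diamond A)^\perp=\Box A^\perp$). Annotated sequents: $\Gamma,\Delta ::= \cdot \mid \Gamma, C \mid \Gamma, \Diamond A_\Sigma \mid \Gamma,[\Delta]_B$, where $C$ is a formula not of the form $\Diamond A$, $\Sigma$ is a finite set of formulas (annotation set) and $B$ a formula (bracket annotation); sequents are taken up to exchange. Annotated unary contexts $\Gamma\{-\}$ (one hole) are defined analogously, $\Gamma\{\Delta\}$ is hole-filling, $\Gamma\{\}=\Gamma\{\cdot\}$. Annotated rules (whenever an active formula in a premise is a $\Diamond$-formula, its annotation is simply discarded): (id) $\Gamma\{\alpha^\perp,\alpha\}$, provided every $\Diamond$-formula occurrence in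 it has annotation $\emptyset$; ($\land$) from $\Gamma_1\{A\}$ and $\Gamma_2\{B\}$ infer $\Gamma\{A\land B\}$; ($\lor$) from $\Gamma\{A,B\}$ infer $\Gamma\{A\lor B\}$; ($\Box$) from $\Gamma\{[\Diamond A^\perp_\Sigma, A]_A\}$ infer $\Gamma\{\Box A\}$; ($\Diamond$) from $\Gamma\{\Delta\{[\Delta',A]_B\},\Diamond A_\Sigma\}$ infer $\Gamma\{\Delta\{[\Delta']_B\},\Diamond A_{\Sigma\cup\{B\}}\}$ (for any unary context $\Delta\{-\}$, possibly of depth $0$); (cut) from $\Gamma_1\{A\}$ and $\Gamma_2\{A^\perp\}$ infer $\Gamma\{\}$. In the two-premise rules, $\Gamma_1\{-\},\Gamma_2\{-\},\Gamma\{-\}$ are identical except for annotation sets of $\Diamond$-formula occurrences (bracket annotations coincide), and each $\Diamond$-formula occurrence in $\Gamma\{-\}$ has as annotation the union of the annotations of the corresponding occurrences in $\Gamma_1,\Gamma_2$. Fix a formula $A$; $\vdash^A\Gamma$ means the annotated sequent $\Gamma$ is derivable with the annotated rules (id), ($\land$), ($\lor$), ($\Box$), ($\Diamond$) together with those instances of (cut) whose cut formula is $A$. Convention: annotations not displayed in a statement (on $\Diamond$-formulas or brackets) are arbitrary; bracket annotations are the same in hypothesis and conclusion, while undisplayed $\Diamond$-annotations in the conclusion are existentially quantified. *)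

theory Defs
  imports Main "HOL-Library.Multiset" "HOL-Library.FSet"
begin

datatype fm = At nat | NAt nat | And fm fm | Or fm fm | Box fm | Dia fm

fun neg :: "fm \<Rightarrow> fm" where
  "neg (At a) = NAt a"
| "neg (NAt a) = At a"
| "neg (And A B) = Or (neg A) (neg B)"
| "neg (Or A B) = And (neg A) (neg B)"
| "neg (Box A) = Dia (neg A)"
| "neg (Dia A) = Box (neg A)"

section \<open>Annotated sequents (up to exchange = multisets)\<close>

text \<open>An item of an annotated sequent: a formula C (intended not of the form Dia _),
  an annotated diamond formula  Dia A with annotation set, or a bracket with contents
  and bracket annotation.\<close>
datatype item = F fm | D fm "fm fset" | Br "item multiset" fm

type_synonym seq = "item multiset"

datatype ctx = Hole "item multiset" | CBr "item multiset" ctx fm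

primrec fill :: "ctx \<Rightarrow> seq \<Rightarrow> seq" where
  "fill (Hole M) S = M + S"
| "fill (CBr M C b) S = add_mset (Br (fill C S) b) M"

primrec wf_item :: "item \<Rightarrow> bool" where
  "wf_item (F A) = (\<forall>B. A \<noteq> Dia B)"
| "wf_item (D A X) = True"
| "wf_item (Br M b) = (\<forall>x\<in>#image_mset wf_item M. x)"

primrec allempty_item :: "item \<Rightarrow> bool" where
  "allempty_item (F A) = True"
| "allempty_item (D A X) = (X = {||})"
| "allempty_item (Br M b) = (\<forall>x\<in>#image_mset allempty_item M. x)"

primrec banns :: "item \<Rightarrow> fm set" where
  "banns (F A) = {}"
| "banns (D A X) = {}"
| "banns (Br M b) = insert b (\<Union> (set_mset (image_mset banns M)))"

primrec erase :: "item \<Rightarrow> item" where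
  "erase (F A) = F A"
| "erase (D A X) = D A {||}"
| "erase (Br M b) = Br (image_mset erase M) b"

primrec erase_ctx :: "ctx \<Rightarrow> ctx" where
  "erase_ctx (Hole M) = Hole (image_mset erase M)"
| "erase_ctx (CBr M C b) = CBr (image_mset erase M) (erase_ctx C) b"

text \<open>An active formula in a premise: diamond formulas carry an (arbitrary, discarded)
  annotation.\<close>
fun fitem :: "fm \<Rightarrow> fm fset \<Rightarrow> item" where
  "fitem (Dia A) X = D A X"
| "fitem A X = F A"

text \<open>Merging of contexts in two-premise rules: identical except for diamond
  annotations, which are united.\<close>
inductive merge_item :: "item \<Rightarrow> item \<Rightarrow> item \<Rightarrow> bool"
  and merge_ms :: "seq \<Rightarrow> seq \<Rightarrow> seq \<Rightarrow> bool" where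
  "merge_item (F A) (F A) (F A)"
| "merge_item (D A X) (D A Y) (D A (X |\<union>| Y))"
| "merge_ms M1 M2 M \<Longrightarrow> merge_item (Br M1 b) (Br M2 b) (Br M b)"
| "merge_ms {#} {#} {#}"
| "merge_item i1 i2 i \<Longrightarrow> merge_ms M1 M2 M \<Longrightarrow>
     merge_ms (add_mset i1 M1) (add_mset i2 M2) (add_mset i M)"

inductive merge_ctx :: "ctx \<Rightarrow> ctx \<Rightarrow> ctx \<Rightarrow> bool" where
  "merge_ms M1 M2 M \<Longrightarrow> merge_ctx (Hole M1) (Hole M2) (Hole M)"
| "merge_ms M1 M2 M \<Longrightarrow> merge_ctx C1 C2 C \<Longrightarrow>
     merge_ctx (CBr M1 C1 b) (CBr M2 C2 b) (CBr M C b)"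

inductive der :: "fm \<Rightarrow> seq \<Rightarrow> bool" for Acut :: fm where
  ax: "S = fill C {#F (NAt a), F (At a)#} \<Longrightarrow> \<forall>i\<in>#S. wf_item i \<Longrightarrow>
       \<forall>i\<in>#S. allempty_item i \<Longrightarrow> der Acut S"
| conj: "der Acut (fill C1 {#fitem A X#}) \<Longrightarrow> der Acut (fill C2 {#fitem B Y#}) \<Longrightarrow>
       merge_ctx C1 C2 C \<Longrightarrow> der Acut (fill C {#F (And A B)#})"
| disj: "der Acut (fill C {#fitem A X, fitem B Y#}) \<Longrightarrow> der Acut (fill C {#F (Or A B)#})"
| box: "der Acut (fill C {#Br {#D (neg A) \<Sigma>, fitem A X#} A#}) \<Longrightarrow>
       der Acut (fill C {#F (Box A)#})"
| dia: "der Acut (fill G (add_mset (D A \<Sigma>) (fill Dc {#Br (add_mset (fitem A X) M) b#}))) \<Longrightarrow>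
       der Acut (fill G (add_mset (D A (finsert b \<Sigma>)) (fill Dc {#Br M b#})))"
| cut: "der Acut (fill C1 {#fitem Acut X#}) \<Longrightarrow> der Acut (fill C2 {#fitem (neg Acut) Y#}) \<Longrightarrow>
       merge_ctx C1 C2 C \<Longrightarrow> der Acut (fill C {#})"

end

theory Submission
  imports Defs
begin

text \<open>Follow the occurrence \<open>\<diamond>\<not>A\<^sub>\<Sigma>\<close> upwards through the derivation and add \<open>\<diamond>\<not>B\<close> next to it in
  its bracket; at the initial sequents this is a harmless weakening. The annotation of the
  occurrence is recomputed along the way: the \<open>\<diamond>\<close>-steps on it move \<open>\<not>A\<close> into brackets of \<open>\<Delta>\<close>,
  none of which is annotated \<open>B\<close>, so the new annotation avoids \<open>B\<close>. A bracket annotated \<open>B\<close> can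
  only arise above a formula \<open>\<box>B\<close> of \<open>\<Delta>\<close>; there the weakened sequent is derived afresh, since
  \<open>\<diamond>\<not>B\<close> may enter the bracket \<open>[\<diamond>\<not>B, B]\<^sub>B\<close> and close it by the generalised identity.
  Merging contexts changes other diamond annotations, so everything is stated up to erasure of
  annotations.\<close>

fun add_top :: "seq \<Rightarrow> ctx \<Rightarrow> ctx" where
  "add_top N (Hole M) = Hole (N + M)"
| "add_top N (CBr M C c) = CBr (N + M) C c"

fun comp_ctx :: "ctx \<Rightarrow> ctx \<Rightarrow> ctx" where
  "comp_ctx (Hole M) H = add_top M H"
| "comp_ctx (CBr M C c) H = CBr M (comp_ctx C H) c"

lemma fill_add_top [simp]: "fill (add_top N H) X = N + fill H X"
  by (cases H) auto

lemma fill_comp_ctx [simp]: "fill (comp_ctx C H) X = fill C (fill H X)"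
  by (induction C) auto

lemma comp_ctx_Hole_empty [simp]: "comp_ctx C (Hole {#}) = C"
  by (induction C) auto

lemma fill_eq_fill_cases:
  "fill C X = fill G {#y#} \<Longrightarrow>
   (\<exists>Q Z c. y = Br Z c \<and> C = comp_ctx G (CBr {#} Q c) \<and> Z = fill Q X) \<or>
   (\<exists>Q. G = comp_ctx C Q \<and> X = fill Q {#y#}) \<or>
   (\<exists>R M Cb Gb. C = comp_ctx R (add_top (M + fill Gb {#y#}) Cb) \<and>
       G = comp_ctx R (add_top (M + fill Cb X) Gb))"
proof (induction C arbitrary: G)
  case (Hole M)
  show ?case
  proof (cases G)
    case (Hole N)
    with Hole.prems have e: "M + X = add_mset y N" by simp
    show ?thesis
    proof (cases "y \<in># X")
      case True
      then obtain X' where X: "X = add_mset y X'" by (metis multi_member_split)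
      with e have "N = M + X'" by simp
      then show ?thesis using Hole X by (intro disjI2 disjI1 exI[of _ "Hole X'"]) auto
    next
      case False
      then have "y \<in># M" using e by (metis union_iff add_mset_add_single union_single_eq_member)
      then obtain M' where M: "M = add_mset y M'" by (metis multi_member_split)
      with e have "N = M' + X" by simp
      then show ?thesis using Hole M
        by (intro disjI2 disjI2 exI[of _ "Hole {#}"] exI[of _ M'] exI[of _ "Hole {#}"]) auto
    qed
  next
    case (CBr N G' c)
    with Hole.prems have e: "M + X = add_mset (Br (fill G' {#y#}) c) N" by simp
    show ?thesis
    proof (cases "Br (fill G' {#y#}) c \<in># X")
      case True
      then obtain X' where X: "X = add_mset (Br (fill G' {#y#}) c) X'" by (metis multi_member_split)
      with e have "N = M + X'" by simp
      then show ?thesis using CBr X by (intro disjI2 disjI1 exI[of _ "CBr X' G' c"]) auto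
    next
      case False
      then have "Br (fill G' {#y#}) c \<in># M"
        using e by (metis union_iff union_single_eq_member add_mset_add_single)
      then obtain M' where M: "M = add_mset (Br (fill G' {#y#}) c) M'" by (metis multi_member_split)
      with e have "N = M' + X" by simp
      then show ?thesis using CBr M
        by (intro disjI2 disjI2 exI[of _ "Hole {#}"] exI[of _ M'] exI[of _ "Hole {#}"]
            exI[of _ "CBr {#} G' c"]) auto
    qed
  qed
next
  case (CBr M C c)
  show ?case
  proof (cases G)
    case (Hole N)
    with CBr.prems have e: "add_mset (Br (fill C X) c) M = add_mset y N" by simp
    show ?thesis
    proof (cases "y = Br (fill C X) c")
      case True
      then have "M = N" using e by simp
      then show ?thesis using True Hole by (intro disjI1 exI[of _ C]) auto
    next
      case False
      then obtain K where K: "M = add_mset y K" "N = add_mset (Br (fill C X) c) K"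
        using e by (auto simp: add_eq_conv_ex)
      then show ?thesis using Hole
        by (intro disjI2 disjI2 exI[of _ "Hole {#}"] exI[of _ K] exI[of _ "CBr {#} C c"]
            exI[of _ "Hole {#}"]) auto
    qed
  next
    case (CBr N G' e)
    with CBr.prems have eq: "add_mset (Br (fill C X) c) M = add_mset (Br (fill G' {#y#}) e) N"
      by simp
    show ?thesis
    proof (cases "Br (fill C X) c = Br (fill G' {#y#}) e")
      case True
      then have "M = N" "c = e" "fill C X = fill G' {#y#}" using eq by auto
      from CBr.IH[OF this(3)] show ?thesis
      proof (elim disjE exE conjE)
        fix Q Z b assume "y = Br Z b" "C = comp_ctx G' (CBr {#} Q b)" "Z = fill Q X"
        then show ?thesis using \<open>M = N\<close> \<open>c = e\<close> CBr by (intro disjI1 exI[of _ Q]) auto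
      next
        fix Q assume "G' = comp_ctx C Q" "X = fill Q {#y#}"
        then show ?thesis using \<open>M = N\<close> \<open>c = e\<close> CBr by (intro disjI2 disjI1 exI[of _ Q]) auto
      next
        fix R M0 Cb Gb
        assume "C = comp_ctx R (add_top (M0 + fill Gb {#y#}) Cb)"
          "G' = comp_ctx R (add_top (M0 + fill Cb X) Gb)"
        then show ?thesis using \<open>M = N\<close> \<open>c = e\<close> CBr
          by (intro disjI2 disjI2 exI[of _ "CBr M R c"]) auto
      qed
    next
      case False
      then obtain K where K: "M = add_mset (Br (fill G' {#y#}) e) K"
          "N = add_mset (Br (fill C X) c) K"
        using eq by (auto simp: add_eq_conv_ex)
      then show ?thesis using CBr
        by (intro disjI2 disjI2 exI[of _ "Hole {#}"] exI[of _ K] exI[of _ "CBr {#} C c"]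
            exI[of _ "CBr {#} G' e"]) auto
    qed
  qed
qed

lemma fill_eq_fillE:
  assumes "fill C X = fill G {#y#}"
  obtains (hole_in_item) Q Z c where "y = Br Z c" "C = comp_ctx G (CBr {#} Q c)" "Z = fill Q X"
  | (item_in_filler) Q where "G = comp_ctx C Q" "X = fill Q {#y#}"
  | (disjoint) R M Cb Gb where "C = comp_ctx R (add_top (M + fill Gb {#y#}) Cb)"
      "G = comp_ctx R (add_top (M + fill Cb X) Gb)"
  using fill_eq_fill_cases[OF assms] by blast

lemma mem_fill_cases:
  assumes "d \<in># fill Q X" "\<not> (\<exists>M c. d = Br M c)"
  shows "(\<exists>Q'. Q = add_top {#d#} Q') \<or> (\<exists>N. Q = Hole N \<and> d \<in># X)"
proof (cases Q)
  case (Hole N)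
  then show ?thesis
    using assms by (cases "d \<in># X") (auto dest!: multi_member_split intro: exI[of _ "Hole _"])
next
  case (CBr N C c)
  then obtain N' where "N = add_mset d N'" using assms by (auto dest: multi_member_split)
  then show ?thesis using CBr by (intro disjI1 exI[of _ "CBr N' C c"]) simp
qed

lemma fill_singleton_has_bracket: "\<exists>M c. Br M c \<in># fill Q {#Br Z b#}"
  by (cases Q) auto

abbreviation erase_ms :: "seq \<Rightarrow> seq" where
  "erase_ms M \<equiv> image_mset erase M"

lemma erase_fill [simp]: "erase_ms (fill C X) = fill (erase_ctx C) (erase_ms X)"
  by (induction C) auto

lemma erase_ctx_add_top [simp]: "erase_ctx (add_top N H) = add_top (erase_ms N) (erase_ctx H)"
  by (cases H) auto

lemma erase_ctx_comp_ctx [simp]: "erase_ctx (comp_ctx C H) = comp_ctx (erase_ctx C) (erase_ctx H)"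
  by (induction C) auto

lemma erase_idem [simp]: "erase (erase i) = erase i"
  by (induction i) (auto simp: multiset.map_comp comp_def intro: multiset.map_cong0)

lemma erase_ctx_idem [simp]: "erase_ctx (erase_ctx C) = erase_ctx C"
  by (induction C) (auto simp: multiset.map_comp comp_def)

lemma erase_eq_F: "erase w = F A \<Longrightarrow> w = F A"
  by (cases w) auto

lemma erase_eq_D: "erase w = D A X \<Longrightarrow> \<exists>Y. w = D A Y"
  by (cases w) auto

lemma erase_eq_Br: "erase w = Br M b \<Longrightarrow> \<exists>N. w = Br N b \<and> erase_ms N = M"
  by (cases w) auto

lemma erase_fitem [simp]: "erase (fitem A X) = fitem A {||}"
  by (cases A) auto

lemma erase_eq_fitem: "erase w = fitem A X \<Longrightarrow> \<exists>Y. w = fitem A Y"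
  by (cases A; cases w) auto

text \<open>The \<open>lift_\<close> lemmas transfer a decomposition of the erasure of a sequent or context back
  to the sequent or context itself.\<close>

lemma lift_add_mset:
  "erase_ms W = add_mset a M \<Longrightarrow> \<exists>w W'. W = add_mset w W' \<and> erase w = a \<and> erase_ms W' = M"
  by (metis msed_map_invR)

lemma lift_plus:
  "erase_ms W = M + N \<Longrightarrow> \<exists>W1 W2. W = W1 + W2 \<and> erase_ms W1 = M \<and> erase_ms W2 = N"
  by (metis image_mset_eq_plusD)

lemma lift_single_D: "erase_ms N = {#D A {||}#} \<Longrightarrow> \<exists>S. N = {#D A S#}"
  by (metis erase_eq_D lift_add_mset image_mset_is_empty_iff)

lemma lift_single_fitem: "erase_ms N = {#fitem A {||}#} \<Longrightarrow> \<exists>X. N = {#fitem A X#}"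
  by (metis erase_eq_fitem lift_add_mset image_mset_is_empty_iff)

lemma lift_fill:
  "erase_ms W = erase_ms (fill C X) \<Longrightarrow>
   \<exists>C' X'. W = fill C' X' \<and> erase_ctx C' = erase_ctx C \<and> erase_ms X' = erase_ms X"
proof (induction C arbitrary: W)
  case (Hole M)
  then obtain W1 W2 where "W = W1 + W2" "erase_ms W1 = erase_ms M" "erase_ms W2 = erase_ms X"
    using lift_plus[of W "erase_ms M" "erase_ms X"] by auto
  then show ?case by (intro exI[of _ "Hole W1"] exI[of _ W2]) auto
next
  case (CBr M C c)
  then have "erase_ms W = add_mset (Br (erase_ms (fill C X)) c) (erase_ms M)" by simp
  then obtain w W' where w: "W = add_mset w W'" "erase w = Br (erase_ms (fill C X)) c"
      "erase_ms W' = erase_ms M"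
    using lift_add_mset by metis
  then obtain N where N: "w = Br N c" "erase_ms N = erase_ms (fill C X)" using erase_eq_Br by metis
  from CBr.IH[OF N(2)] obtain C' X' where
    "N = fill C' X'" "erase_ctx C' = erase_ctx C" "erase_ms X' = erase_ms X"
    by blast
  then show ?case using w N by (intro exI[of _ "CBr W' C' c"] exI[of _ X']) auto
qed

lemma lift_bracket_fitem:
  "erase_ms Z = erase_ms {#Br (add_mset (fitem A X) M) c#} \<Longrightarrow>
   \<exists>X' M'. Z = {#Br (add_mset (fitem A X') M') c#} \<and> erase_ms M' = erase_ms M"
proof -
  assume "erase_ms Z = erase_ms {#Br (add_mset (fitem A X) M) c#}"
  then obtain w where w: "Z = {#w#}" "erase w = Br (add_mset (fitem A {||}) (erase_ms M)) c"
    by (auto dest!: lift_add_mset)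
  then obtain N where N: "w = Br N c" "erase_ms N = add_mset (fitem A {||}) (erase_ms M)"
    using erase_eq_Br by metis
  then obtain u N' where "N = add_mset u N'" "erase u = fitem A {||}" "erase_ms N' = erase_ms M"
    using lift_add_mset by metis
  with w N show ?thesis by (metis erase_eq_fitem)
qed

lemma lift_add_top:
  "erase_ctx G = erase_ctx (add_top N H) \<Longrightarrow>
   \<exists>N' H'. G = add_top N' H' \<and> erase_ms N' = erase_ms N \<and> erase_ctx H' = erase_ctx H"
proof (cases G)
  case (Hole M)
  assume a: "erase_ctx G = erase_ctx (add_top N H)"
  then obtain K where H: "H = Hole K" using Hole by (cases H) auto
  then have "erase_ms M = erase_ms N + erase_ms K" using a Hole by simp
  then obtain M1 M2 where "M = M1 + M2" "erase_ms M1 = erase_ms N" "erase_ms M2 = erase_ms K"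
    using lift_plus by metis
  then show ?thesis using Hole H by (intro exI[of _ M1] exI[of _ "Hole M2"]) auto
next
  case (CBr M C c)
  assume a: "erase_ctx G = erase_ctx (add_top N H)"
  then obtain K H0 where H: "H = CBr K H0 c" using CBr by (cases H) auto
  then have "erase_ms M = erase_ms N + erase_ms K" "erase_ctx C = erase_ctx H0" using a CBr by auto
  then obtain M1 M2 where "M = M1 + M2" "erase_ms M1 = erase_ms N" "erase_ms M2 = erase_ms K"
    using lift_plus by metis
  then show ?thesis using CBr H \<open>erase_ctx C = erase_ctx H0\<close>
    by (intro exI[of _ M1] exI[of _ "CBr M2 C c"]) auto
qed

lemma lift_comp_ctx:
  "erase_ctx G = erase_ctx (comp_ctx R H) \<Longrightarrow>
   \<exists>R' H'. G = comp_ctx R' H' \<and> erase_ctx R' = erase_ctx R \<and> erase_ctx H' = erase_ctx H"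
proof (induction R arbitrary: G)
  case (Hole M)
  then obtain N' H' where "G = add_top N' H'" "erase_ms N' = erase_ms M"
      "erase_ctx H' = erase_ctx H"
    using lift_add_top by (metis comp_ctx.simps(1))
  then show ?case by (intro exI[of _ "Hole N'"] exI[of _ H']) auto
next
  case (CBr M R c)
  then obtain M' G0 where G: "G = CBr M' G0 c" "erase_ms M' = erase_ms M"
      "erase_ctx G0 = erase_ctx (comp_ctx R H)"
    by (cases G) auto
  from CBr.IH[OF G(3)] obtain R' H' where
    "G0 = comp_ctx R' H'" "erase_ctx R' = erase_ctx R" "erase_ctx H' = erase_ctx H"
    by blast
  then show ?case using G by (intro exI[of _ "CBr M' R' c"] exI[of _ H']) auto
qed

lemma lift_CBr:
  "erase_ctx G = erase_ctx (CBr M C c) \<Longrightarrow>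
   \<exists>M' C'. G = CBr M' C' c \<and> erase_ms M' = erase_ms M \<and> erase_ctx C' = erase_ctx C"
  by (cases G) auto

lemma merge_erase:
  "(merge_item i1 i2 i \<longrightarrow> erase i1 = erase i \<and> erase i2 = erase i) \<and>
   (merge_ms M1 M2 M \<longrightarrow> erase_ms M1 = erase_ms M \<and> erase_ms M2 = erase_ms M)"
  by (induction rule: merge_item_merge_ms.induct) auto

lemma merge_ms_erase: "merge_ms M1 M2 M \<Longrightarrow> erase_ms M1 = erase_ms M \<and> erase_ms M2 = erase_ms M"
  using merge_erase by blast

lemma merge_ctx_erase:
  "merge_ctx C1 C2 C \<Longrightarrow> erase_ctx C1 = erase_ctx C \<and> erase_ctx C2 = erase_ctx C"
  by (induction rule: merge_ctx.induct) (auto dest: merge_ms_erase)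

lemma merge_item_exists: "erase x = erase y \<Longrightarrow> \<exists>z. merge_item x y z"
proof (induction x arbitrary: y)
  case (F A)
  then show ?case by (metis erase_eq_F erase.simps(1) merge_item_merge_ms.intros(1))
next
  case (D A X)
  then show ?case by (metis erase_eq_D erase.simps(2) merge_item_merge_ms.intros(2))
next
  case (Br M b)
  then obtain N where N: "y = Br N b" "erase_ms N = erase_ms M" using erase_eq_Br[of y] by force
  have "\<exists>K. merge_ms M' N K" if "set_mset M' \<subseteq> set_mset M" "erase_ms N = erase_ms M'" for M' N
    using that
  proof (induction M' arbitrary: N)
    case empty
    then show ?case by (auto intro: merge_item_merge_ms.intros)
  next
    case (add x M')
    then obtain y N' where "N = add_mset y N'" "erase y = erase x" "erase_ms N' = erase_ms M'"
      using lift_add_mset[of N "erase x" "erase_ms M'"] by auto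
    with add Br.IH show ?case
      by (metis insert_subset merge_item_merge_ms.intros(5) set_mset_add_mset_insert)
  qed
  from this[OF subset_refl] N show ?case by (metis merge_item_merge_ms.intros(3))
qed

lemma merge_ms_exists: "erase_ms M = erase_ms N \<Longrightarrow> \<exists>K. merge_ms M N K"
proof (induction M arbitrary: N)
  case empty
  then show ?case by (auto intro: merge_item_merge_ms.intros)
next
  case (add x M)
  then obtain y N' where "N = add_mset y N'" "erase y = erase x" "erase_ms N' = erase_ms M"
    using lift_add_mset[of N "erase x" "erase_ms M"] by auto
  with add.IH show ?case by (metis merge_item_exists merge_item_merge_ms.intros(5))
qed

lemma merge_ctx_exists: "erase_ctx C1 = erase_ctx C2 \<Longrightarrow> \<exists>C. merge_ctx C1 C2 C"
proof (induction C1 arbitrary: C2)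
  case (Hole M)
  then obtain N where "C2 = Hole N" "erase_ms M = erase_ms N" by (cases C2) auto
  then show ?case using merge_ms_exists by (metis merge_ctx.intros(1))
next
  case (CBr M C c)
  then obtain N D0 where "C2 = CBr N D0 c" "erase_ms M = erase_ms N" "erase_ctx C = erase_ctx D0"
    by (cases C2) auto
  then show ?case using merge_ms_exists CBr.IH by (metis merge_ctx.intros(2))
qed

lemma merge_ms_plus:
  "merge_ms A1 A2 A \<Longrightarrow> merge_ms B1 B2 B \<Longrightarrow> merge_ms (A1 + B1) (A2 + B2) (A + B)"
proof (induction A1 A2 A rule: merge_item_merge_ms.inducts(2)[where ?P1.0="\<lambda>_ _ _. True"])
  case (5 i1 i2 i M1 M2 M)
  then show ?case by (auto intro: merge_item_merge_ms.intros)
qed auto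

lemma merge_ms_single: "merge_item i1 i2 i \<Longrightarrow> merge_ms {#i1#} {#i2#} {#i#}"
  by (auto intro: merge_item_merge_ms.intros)

lemma merge_ms_add: 
  "merge_item i1 i2 i \<Longrightarrow> merge_ms M1 M2 M \<Longrightarrow>
      merge_ms (add_mset i1 M1) (add_mset i2 M2) (add_mset i M)"
  by (auto intro: merge_item_merge_ms.intros)

lemma merge_item_refl: "merge_item x x x"
proof (induction x)
  case (Br M b)
  have "merge_ms M M M" using Br by (induction M) (auto intro: merge_item_merge_ms.intros)
  then show ?case by (auto intro: merge_item_merge_ms.intros)
qed (auto intro: merge_item_merge_ms.intros(1)
    merge_item_merge_ms.intros(2)[of _ X X for X, simplified])

lemma merge_ms_refl: "merge_ms M M M"
  by (induction M) (auto intro: merge_item_merge_ms.intros merge_item_refl)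

lemma merge_ctx_refl: "merge_ctx C C C"
  by (induction C) (auto intro: merge_ctx.intros merge_ms_refl)

lemma merge_ctx_add_top:
  "merge_ctx H1 H2 H \<Longrightarrow> merge_ms N1 N2 N \<Longrightarrow> merge_ctx (add_top N1 H1) (add_top N2 H2) (add_top N H)"
  by (induction rule: merge_ctx.induct) (auto intro: merge_ctx.intros merge_ms_plus)

lemma merge_ctx_comp_ctx:
  "merge_ctx R1 R2 R \<Longrightarrow> merge_ctx H1 H2 H \<Longrightarrow>
      merge_ctx (comp_ctx R1 H1) (comp_ctx R2 H2) (comp_ctx R H)"
  by (induction rule: merge_ctx.induct) (auto intro: merge_ctx.intros merge_ctx_add_top)

lemma merge_fill:
  "merge_ctx C1 C2 C \<Longrightarrow> merge_ms X1 X2 X \<Longrightarrow> merge_ms (fill C1 X1) (fill C2 X2) (fill C X)"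
  by (induction rule: merge_ctx.induct) (auto intro: merge_item_merge_ms.intros merge_ms_plus)

lemma merge_fitem: "merge_item (fitem A X) (fitem A Y) (fitem A (X |\<union>| Y))"
  by (cases A) (auto intro: merge_item_merge_ms.intros)

lemma merge_ms_split:
  "merge_ms M1 M2 M \<Longrightarrow> M = A + B \<Longrightarrow>
   \<exists>A1 B1 A2 B2. M1 = A1 + B1 \<and> M2 = A2 + B2 \<and> merge_ms A1 A2 A \<and> merge_ms B1 B2 B"
proof (induction M1 M2 M arbitrary: A B
    rule: merge_item_merge_ms.inducts(2)[where ?P1.0="\<lambda>_ _ _. True"])
  case 4
  then show ?case by (auto intro: merge_item_merge_ms.intros)
next
  case (5 i1 i2 i M1 M2 M)
  show ?case
  proof (cases "i \<in># A")
    case True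
    then obtain A' where A: "A = add_mset i A'" by (metis multi_member_split)
    with 5 have "M = A' + B" by simp
    from "5.IH"[OF this] obtain A1 B1 A2 B2 where
      "M1 = A1 + B1 \<and> M2 = A2 + B2 \<and> merge_ms A1 A2 A' \<and> merge_ms B1 B2 B"
      by blast
    with A 5 show ?thesis
      by (intro exI[of _ "add_mset i1 A1"] exI[of _ B1] exI[of _ "add_mset i2 A2"] exI[of _ B2])
        (auto intro: merge_item_merge_ms.intros)
  next
    case False
    then have "i \<in># B" using 5 by (metis union_iff add_mset_add_single union_single_eq_member)
    then obtain B' where B: "B = add_mset i B'" by (metis multi_member_split)
    with 5 have "M = A + B'" by simp
    from "5.IH"[OF this] obtain A1 B1 A2 B2 where
      "M1 = A1 + B1 \<and> M2 = A2 + B2 \<and> merge_ms A1 A2 A \<and> merge_ms B1 B2 B'"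
      by blast
    with B 5 show ?thesis
      by (intro exI[of _ A1] exI[of _ "add_mset i1 B1"] exI[of _ A2] exI[of _ "add_mset i2 B2"])
        (auto intro: merge_item_merge_ms.intros)
  qed
qed auto

inductive_cases merge_ms_emptyE: "merge_ms M1 M2 {#}"
inductive_cases merge_item_DE: "merge_item i1 i2 (D A X)"
inductive_cases merge_item_BrE: "merge_item i1 i2 (Br M b)"
inductive_cases merge_ctx_HoleE: "merge_ctx C1 C2 (Hole M)"
inductive_cases merge_ctx_CBrE: "merge_ctx C1 C2 (CBr M C c)"

lemma merge_ms_empty_inv: "merge_ms M1 M2 {#} \<Longrightarrow> M1 = {#} \<and> M2 = {#}"
  by (erule merge_ms_emptyE) auto

lemma merge_ms_single_inv:
  "merge_ms M1 M2 {#i#} \<Longrightarrow> \<exists>i1 i2. M1 = {#i1#} \<and> M2 = {#i2#} \<and> merge_item i1 i2 i"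
  by (erule merge_ms.cases) (auto dest: merge_ms_empty_inv)

lemma merge_ms_add_inv:
  "merge_ms M1 M2 (add_mset i M) \<Longrightarrow>
   \<exists>i1 i2 M1' M2'. M1 = add_mset i1 M1' \<and> M2 = add_mset i2 M2' \<and> merge_item i1 i2 i \<and>
       merge_ms M1' M2' M"
  using merge_ms_split[of M1 M2 "add_mset i M" "{#i#}" M] merge_ms_single_inv by fastforce

lemma merge_item_D_inv:
  "merge_item i1 i2 (D A X) \<Longrightarrow> \<exists>X1 X2. i1 = D A X1 \<and> i2 = D A X2 \<and> X = X1 |\<union>| X2"
  by (erule merge_item_DE) auto

lemma merge_item_Br_inv:
  "merge_item i1 i2 (Br M b) \<Longrightarrow> \<exists>M1 M2. i1 = Br M1 b \<and> i2 = Br M2 b \<and> merge_ms M1 M2 M"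
  by (erule merge_item_BrE) auto

lemma merge_ctx_CBr_inv:
  "merge_ctx C1 C2 (CBr M C c) \<Longrightarrow>
   \<exists>M1 M2 D1 D2. C1 = CBr M1 D1 c \<and> C2 = CBr M2 D2 c \<and> merge_ms M1 M2 M \<and> merge_ctx D1 D2 C"
  by (auto elim: merge_ctx_CBrE)

lemma merge_fill_inv:
  "merge_ms M1 M2 (fill C X) \<Longrightarrow>
   \<exists>C1 C2 X1 X2. M1 = fill C1 X1 \<and> M2 = fill C2 X2 \<and> merge_ctx C1 C2 C \<and> merge_ms X1 X2 X"
proof (induction C arbitrary: M1 M2)
  case (Hole M)
  then obtain A1 B1 A2 B2 where "M1 = A1 + B1 \<and> M2 = A2 + B2 \<and> merge_ms A1 A2 M \<and> merge_ms B1 B2 X"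
    using merge_ms_split by (metis fill.simps(1))
  then show ?case by (intro exI[of _ "Hole A1"] exI[of _ "Hole A2"]) (auto intro: merge_ctx.intros)
next
  case (CBr M C c)
  then obtain i1 i2 M1' M2' where a: "M1 = add_mset i1 M1'" "M2 = add_mset i2 M2'"
      "merge_item i1 i2 (Br (fill C X) c)" "merge_ms M1' M2' M"
    using merge_ms_add_inv by (metis fill.simps(2))
  then obtain N1 N2 where b: "i1 = Br N1 c" "i2 = Br N2 c" "merge_ms N1 N2 (fill C X)"
    using merge_item_Br_inv by blast
  from CBr.IH[OF b(3)] obtain C1 C2 X1 X2 where
    "N1 = fill C1 X1 \<and> N2 = fill C2 X2 \<and> merge_ctx C1 C2 C \<and> merge_ms X1 X2 X"
    by blast
  then show ?case using a b
    by (intro exI[of _ "CBr M1' C1 c"] exI[of _ "CBr M2' C2 c"]) (auto intro: merge_ctx.intros)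
qed

lemma merge_ctx_add_top_inv:
  "merge_ctx C1 C2 (add_top N H) \<Longrightarrow>
   \<exists>N1 N2 H1 H2. C1 = add_top N1 H1 \<and> C2 = add_top N2 H2 \<and> merge_ms N1 N2 N \<and> merge_ctx H1 H2 H"
proof (cases H)
  case (Hole M)
  assume "merge_ctx C1 C2 (add_top N H)"
  then obtain M1 M2 where "C1 = Hole M1" "C2 = Hole M2" "merge_ms M1 M2 (N + M)" using Hole
    by (auto elim: merge_ctx_HoleE)
  then show ?thesis using Hole merge_ms_split[of M1 M2 "N + M" N M]
    by (metis add_top.simps(1) merge_ctx.intros(1))
next
  case (CBr M C c)
  assume "merge_ctx C1 C2 (add_top N H)"
  then obtain M1 M2 D1 D2 where "C1 = CBr M1 D1 c" "C2 = CBr M2 D2 c" "merge_ms M1 M2 (N + M)"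
      "merge_ctx D1 D2 C"
    using CBr by (auto elim: merge_ctx_CBrE)
  then show ?thesis using CBr merge_ms_split[of M1 M2 "N + M" N M]
    by (metis add_top.simps(2) merge_ctx.intros(2))
qed

lemma merge_ctx_comp_ctx_inv:
  "merge_ctx C1 C2 (comp_ctx R H) \<Longrightarrow>
   \<exists>R1 R2 H1 H2. C1 = comp_ctx R1 H1 \<and> C2 = comp_ctx R2 H2 \<and> merge_ctx R1 R2 R \<and> merge_ctx H1 H2 H"
proof (induction R arbitrary: C1 C2)
  case (Hole M)
  then show ?case using merge_ctx_add_top_inv[of C1 C2 M H]
    by (metis comp_ctx.simps(1) merge_ctx.intros(1))
next
  case (CBr M R c)
  then obtain M1 M2 D1 D2 where a: "C1 = CBr M1 D1 c" "C2 = CBr M2 D2 c" "merge_ms M1 M2 M"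
      "merge_ctx D1 D2 (comp_ctx R H)"
    by (auto elim: merge_ctx_CBrE)
  from CBr.IH[OF a(4)] show ?case using a by (metis comp_ctx.simps(2) merge_ctx.intros(2))
qed

lemma all_fill:
  assumes "\<And>M b. P (Br M b) = (Q b \<and> (\<forall>i\<in>#M. P i))"
  shows "(\<forall>i\<in>#fill C X. P i) = ((\<forall>i\<in>#fill C {#}. P i) \<and> (\<forall>i\<in>#X. P i))"
  by (induction C) (auto simp: assms)

definition wf_unannotated :: "seq \<Rightarrow> bool" where
  "wf_unannotated S \<longleftrightarrow> (\<forall>i\<in>#S. wf_item i \<and> allempty_item i)"

definition bracket_free :: "fm \<Rightarrow> seq \<Rightarrow> bool" where
  "bracket_free B S \<longleftrightarrow> (\<forall>i\<in>#S. B \<notin> banns i)"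

lemma wf_fill [simp]:
  "X \<noteq> {#} \<Longrightarrow> (\<forall>i\<in>#fill C X. wf_item i) = ((\<forall>i\<in>#fill C {#}. wf_item i) \<and> (\<forall>i\<in>#X. wf_item i))"
  by (rule all_fill[where Q = "\<lambda>_. True"]) simp

lemma wf_unannotated_fill [simp]:
  "X \<noteq> {#} \<Longrightarrow> wf_unannotated (fill C X) = (wf_unannotated (fill C {#}) \<and> wf_unannotated X)"
  unfolding wf_unannotated_def by (rule all_fill[where Q = "\<lambda>_. True"]) auto

lemma bracket_free_fill:
  "bracket_free B (fill C X) = (bracket_free B (fill C {#}) \<and> bracket_free B X)"
  unfolding bracket_free_def by (rule all_fill[where Q = "\<lambda>b. B \<noteq> b"]) auto

lemma wf_unannotated_simps [simp]:
  "wf_unannotated {#}"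
  "wf_unannotated (add_mset (F A) M) = ((\<forall>B. A \<noteq> Dia B) \<and> wf_unannotated M)"
  "wf_unannotated (add_mset (D A S) M) = (S = {||} \<and> wf_unannotated M)"
  "wf_unannotated (add_mset (Br N b) M) = (wf_unannotated N \<and> wf_unannotated M)"
  "wf_unannotated (M + N) = (wf_unannotated M \<and> wf_unannotated N)"
  by (auto simp: wf_unannotated_def)

lemma wf_unannotated_add_fitem [simp]:
  "wf_unannotated (add_mset (fitem A {||}) M) = wf_unannotated M"
  by (cases A) auto

lemma bracket_free_simps [simp]:
  "bracket_free B {#}"
  "bracket_free B (add_mset (D A S) M) = bracket_free B M"
  "bracket_free B (add_mset (Br N c) M) = (B \<noteq> c \<and> bracket_free B N \<and> bracket_free B M)"
  "bracket_free B (M + N) = (bracket_free B M \<and> bracket_free B N)"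
  by (auto simp: bracket_free_def)

lemma bracket_free_add_fitem [simp]: "bracket_free B (add_mset (fitem A S) M) = bracket_free B M"
  by (cases A) (auto simp: bracket_free_def)

lemma wf_erase [simp]: "wf_item (erase i) = wf_item i"
  by (induction i) auto

lemma allempty_erase [simp]: "allempty_item (erase i)"
  by (induction i) auto

lemma banns_erase [simp]: "banns (erase i) = banns i"
  by (induction i) auto

lemma wf_unannotated_erase: "(\<forall>i\<in>#M. wf_item i) \<Longrightarrow> wf_unannotated (erase_ms M)"
  by (simp add: wf_unannotated_def)

lemma bracket_free_erase_ms [simp]: "bracket_free B (erase_ms M) = bracket_free B M"
  by (simp add: bracket_free_def)

lemma bracket_free_erase: "erase_ms M = erase_ms N \<Longrightarrow> bracket_free B M = bracket_free B N"
  by (metis bracket_free_erase_ms)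

lemma neg_neg [simp]: "neg (neg A) = A"
  by (induction A) auto

lemma wf_ctx_erase:
  assumes "erase_ctx C1 = erase_ctx C"
  shows "(\<forall>i\<in>#fill C1 X. wf_item i) = (\<forall>i\<in>#fill C X. wf_item i)"
proof -
  have "(\<forall>i\<in>#M. wf_item i) = (\<forall>i\<in>#erase_ms M. wf_item i)" for M
    by simp
  then show ?thesis by (metis assms erase_fill)
qed

lemma der_wf: "der Ac S \<Longrightarrow> \<forall>i\<in>#S. wf_item i"
proof (induction rule: der.induct)
  case (ax S C a)
  then show ?case by blast
next
  case (disj C A X B Y)
  then show ?case by simp
next
  case (box C A \<Sigma> X)
  then show ?case by simp
next
  case (dia G A \<Sigma> Dc X M b)
  then show ?case by simp
next
  case (conj C1 A X C2 B Y C)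
  have "erase_ctx C1 = erase_ctx C" using merge_ctx_erase[OF conj.hyps(3)] by blast
  moreover have "\<forall>i\<in>#fill C1 {#}. wf_item i" using conj.IH(1) by simp
  ultimately have "\<forall>i\<in>#fill C {#}. wf_item i" using wf_ctx_erase by blast
  then show ?case by simp
next
  case (cut C1 X C2 Y C)
  have "erase_ctx C1 = erase_ctx C" using merge_ctx_erase[OF cut.hyps(3)] by blast
  moreover have "\<forall>i\<in>#fill C1 {#}. wf_item i" using cut.IH(1) by simp
  ultimately show ?case using wf_ctx_erase by blast
qed

section \<open>Generalised identity\<close>

lemma der_identity_And:
  assumes IH1: "\<And>K. wf_unannotated (fill K {#}) \<Longrightarrow>
      \<exists>X Y. der Ac (fill K {#fitem E1 X, fitem (neg E1) Y#})"
    and IH2: "\<And>K. wf_unannotated (fill K {#}) \<Longrightarrow>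
      \<exists>X Y. der Ac (fill K {#fitem E2 X, fitem (neg E2) Y#})"
    and K: "wf_unannotated (fill K {#})"
  shows "der Ac (fill K {#F (And E1 E2), F (Or (neg E1) (neg E2))#})"
proof -
  obtain X1 Y1 where d1: "der Ac (fill (comp_ctx K (Hole {#fitem (neg E2) {||}#}))
      {#fitem E1 X1, fitem (neg E1) Y1#})"
    using IH1[of "comp_ctx K (Hole {#fitem (neg E2) {||}#})"] K by auto
  obtain X2 Y2 where d2: "der Ac (fill (comp_ctx K (Hole {#fitem (neg E1) {||}#}))
      {#fitem E2 X2, fitem (neg E2) Y2#})"
    using IH2[of "comp_ctx K (Hole {#fitem (neg E1) {||}#})"] K by auto
  have m: "merge_ctx (comp_ctx K (Hole {#fitem (neg E1) Y1, fitem (neg E2) {||}#}))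
                     (comp_ctx K (Hole {#fitem (neg E1) {||}, fitem (neg E2) Y2#}))
                     (comp_ctx K (Hole {#fitem (neg E1) Y1, fitem (neg E2) Y2#}))"
    using merge_ctx_comp_ctx[OF merge_ctx_refl
        merge_ctx.intros(1)[OF merge_ms_add[OF merge_fitem merge_ms_single[OF merge_fitem]]]]
    by (metis funion_fempty_left funion_fempty_right)
  have "der Ac (fill (comp_ctx K (Hole {#fitem (neg E1) Y1, fitem (neg E2) Y2#}))
      {#F (And E1 E2)#})"
    by (rule der.conj[OF _ _ m, where A = E1 and X = X1 and B = E2 and Y = X2])
      (use d1 d2 in \<open>auto simp: add_mset_commute\<close>)
  then have "der Ac (fill (comp_ctx K (Hole {#F (And E1 E2)#}))
      {#fitem (neg E1) Y1, fitem (neg E2) Y2#})"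
    by (auto simp: add_mset_commute)
  from der.disj[OF this] show ?thesis by (auto simp: add_mset_commute)
qed

lemma der_identity_Box:
  assumes IH: "\<And>K. wf_unannotated (fill K {#}) \<Longrightarrow>
      \<exists>X Y. der Ac (fill K {#fitem E X, fitem (neg E) Y#})"
    and K: "wf_unannotated (fill K {#})"
  shows "der Ac (fill K {#F (Box E), D (neg E) {|E|}#})"
proof -
  let ?K = "comp_ctx K (CBr {#D (neg E) {||}#} (Hole {#D (neg E) {||}#}) E)"
  obtain X Y where "der Ac (fill ?K {#fitem E X, fitem (neg E) Y#})"
    using IH[of ?K] K by auto
  then have "der Ac (fill K (add_mset (D (neg E) {||})
      (fill (Hole {#}) {#Br (add_mset (fitem (neg E) Y) {#D (neg E) {||}, fitem E X#}) E#})))"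
    by (simp add: add_mset_commute)
  from der.dia[OF this]
  have "der Ac (fill (comp_ctx K (Hole {#D (neg E) {|E|}#}))
      {#Br {#D (neg E) {||}, fitem E X#} E#})"
    by (simp add: add_mset_commute)
  from der.box[OF this] show ?thesis by (simp add: add_mset_commute)
qed

lemma der_identity:
  "wf_unannotated (fill K {#}) \<Longrightarrow> \<exists>X Y. der Ac (fill K {#fitem E X, fitem (neg E) Y#})"
proof (induction E arbitrary: K)
  case (At a)
  then have "wf_unannotated (fill K {#F (NAt a), F (At a)#})" by simp
  then have "der Ac (fill K {#F (NAt a), F (At a)#})"
    by (intro der.ax[OF refl]) (auto simp: wf_unannotated_def)
  then show ?case by (simp add: add_mset_commute)
next
  case (NAt a)
  then have "wf_unannotated (fill K {#F (NAt a), F (At a)#})" by simp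
  then have "der Ac (fill K {#F (NAt a), F (At a)#})"
    by (intro der.ax[OF refl]) (auto simp: wf_unannotated_def)
  then show ?case by simp
next
  case (And E1 E2)
  then have "der Ac (fill K {#F (And E1 E2), F (Or (neg E1) (neg E2))#})"
    by (rule der_identity_And)
  then show ?case by simp
next
  case (Or E1 E2)
  have swap: "\<exists>X Y. der Ac (fill K' {#fitem (neg E) X, fitem (neg (neg E)) Y#})"
    if "\<exists>X Y. der Ac (fill K' {#fitem E X, fitem (neg E) Y#})" for E K'
    using that by (simp add: add_mset_commute) blast
  have "der Ac (fill K {#F (And (neg E1) (neg E2)), F (Or (neg (neg E1)) (neg (neg E2)))#})"
    by (rule der_identity_And) (use Or swap in blast)+
  then show ?case by (simp add: add_mset_commute)
next
  case (Box E)
  then have "der Ac (fill K {#F (Box E), D (neg E) {|E|}#})"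
    by (rule der_identity_Box)
  then show ?case by auto
next
  case (Dia E)
  have "der Ac (fill K {#F (Box (neg E)), D (neg (neg E)) {|neg E|}#})"
  proof (rule der_identity_Box)
    show "\<exists>X Y. der Ac (fill K' {#fitem (neg E) X, fitem (neg (neg E)) Y#})"
      if "wf_unannotated (fill K' {#})" for K'
      using Dia.IH[OF that] by (simp add: add_mset_commute) blast
  qed (rule Dia.prems)
  then have "der Ac (fill K {#D E {|neg E|}, F (Box (neg E))#})" by (simp add: add_mset_commute)
  then show ?case by auto
qed

section \<open>The weakening invariant\<close>

definition weakened_derivable :: "fm \<Rightarrow> fm \<Rightarrow> fm \<Rightarrow> ctx \<Rightarrow> fm fset \<Rightarrow> seq \<Rightarrow> fm \<Rightarrow> bool" where
  "weakened_derivable Ac E B G \<Sigma> \<Delta> b \<longleftrightarrow>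
     (\<exists>G' \<Delta>' \<Sigma>' X. erase_ctx G' = erase_ctx G \<and> erase_ms \<Delta>' = erase_ms \<Delta> \<and> \<Sigma>' |\<subseteq>| \<Sigma> |-| {|B|} \<and>
        der Ac (fill G' {#Br ({#D E \<Sigma>', D (neg B) X#} + \<Delta>') b#}))"

definition weakening_admissible :: "fm \<Rightarrow> fm \<Rightarrow> fm \<Rightarrow> seq \<Rightarrow> bool" where
  "weakening_admissible Ac E B S \<longleftrightarrow>
     (\<forall>G \<Sigma> \<Delta> b. S = fill G {#Br (add_mset (D E \<Sigma>) \<Delta>) b#} \<longrightarrow> bracket_free B \<Delta> \<longrightarrow>
        weakened_derivable Ac E B G \<Sigma> \<Delta> b)"

lemma weakening_admissibleD:
  "weakening_admissible Ac E B (fill G {#Br (add_mset (D E \<Sigma>) \<Delta>) b#}) \<Longrightarrow> bracket_free B \<Delta> \<Longrightarrow>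
   weakened_derivable Ac E B G \<Sigma> \<Delta> b"
  unfolding weakening_admissible_def by blast

lemma weakened_derivableI:
  "erase_ctx G' = erase_ctx G \<Longrightarrow> erase_ms \<Delta>' = erase_ms \<Delta> \<Longrightarrow> \<Sigma>' |\<subseteq>| \<Sigma> |-| {|B|} \<Longrightarrow>
   der Ac (fill G' {#Br ({#D E \<Sigma>', D (neg B) X#} + \<Delta>') b#}) \<Longrightarrow> weakened_derivable Ac E B G \<Sigma> \<Delta> b"
  unfolding weakened_derivable_def by blast

lemma weakened_derivable_fillE:
  assumes "weakened_derivable Ac E B G \<Sigma> (fill Q X) b"
  obtains G' Q' X' \<Sigma>' Y where "erase_ctx G' = erase_ctx G" "erase_ctx Q' = erase_ctx Q"
    "erase_ms X' = erase_ms X" "\<Sigma>' |\<subseteq>| \<Sigma> |-| {|B|}"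
    "der Ac (fill (comp_ctx G' (CBr {#} (add_top {#D E \<Sigma>', D (neg B) Y#} Q') b)) X')"
proof -
  obtain G' \<Delta>' \<Sigma>' Y where g: "erase_ctx G' = erase_ctx G" "erase_ms \<Delta>' = erase_ms (fill Q X)"
      "\<Sigma>' |\<subseteq>| \<Sigma> |-| {|B|}" "der Ac (fill G' {#Br ({#D E \<Sigma>', D (neg B) Y#} + \<Delta>') b#})"
    using assms unfolding weakened_derivable_def by blast
  moreover obtain Q' X' where "\<Delta>' = fill Q' X'" "erase_ctx Q' = erase_ctx Q"
      "erase_ms X' = erase_ms X"
    using lift_fill[OF g(2)] by blast
  ultimately show thesis by (intro that[of G' Q' X' \<Sigma>' Y]) simp_all
qed

lemma weakened_derivable_disjointE:
  assumes "weakened_derivable Ac E B (comp_ctx R (add_top (M + fill Cb X) Gb)) \<Sigma> \<Delta> b"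
  obtains R' M' Gb' Cb' X' \<Sigma>' Y \<Delta>' where "erase_ctx R' = erase_ctx R" "erase_ms M' = erase_ms M"
    "erase_ctx Gb' = erase_ctx Gb" "erase_ctx Cb' = erase_ctx Cb" "erase_ms X' = erase_ms X"
    "erase_ms \<Delta>' = erase_ms \<Delta>" "\<Sigma>' |\<subseteq>| \<Sigma> |-| {|B|}"
    "der Ac (fill (comp_ctx R' (add_top (M' + fill Gb' {#Br ({#D E \<Sigma>', D (neg B) Y#} + \<Delta>') b#})
        Cb')) X')"
proof -
  obtain G' \<Delta>' \<Sigma>' Y where g: "erase_ctx G' = erase_ctx (comp_ctx R (add_top (M + fill Cb X) Gb))"
      "erase_ms \<Delta>' = erase_ms \<Delta>" "\<Sigma>' |\<subseteq>| \<Sigma> |-| {|B|}"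
      "der Ac (fill G' {#Br ({#D E \<Sigma>', D (neg B) Y#} + \<Delta>') b#})"
    using assms unfolding weakened_derivable_def by blast
  obtain R' H' where l1: "G' = comp_ctx R' H'" "erase_ctx R' = erase_ctx R"
      "erase_ctx H' = erase_ctx (add_top (M + fill Cb X) Gb)"
    using lift_comp_ctx[OF g(1)] by blast
  obtain N' Gb' where l2: "H' = add_top N' Gb'" "erase_ms N' = erase_ms (M + fill Cb X)"
      "erase_ctx Gb' = erase_ctx Gb"
    using lift_add_top[OF l1(3)] by blast
  obtain M' W where l3: "N' = M' + W" "erase_ms M' = erase_ms M" "erase_ms W = erase_ms (fill Cb X)"
    using lift_plus[of N' "erase_ms M" "erase_ms (fill Cb X)"] l2(2) by auto
  obtain Cb' X' where l4: "W = fill Cb' X'" "erase_ctx Cb' = erase_ctx Cb"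
      "erase_ms X' = erase_ms X"
    using lift_fill[OF l3(3)] by blast
  show thesis
    by (rule that[OF l1(2) l3(2) l2(3) l4(2) l4(3) g(2) g(3)])
      (use g(4) l1(1) l2(1) l3(1) l4(1) in \<open>simp add: ac_simps\<close>)
qed

text \<open>Rule instances that survive arbitrary changes of the diamond annotations of their premises:
  this is what the induction needs, as the weakened premises come with new annotations.\<close>

definition inference1 :: "fm \<Rightarrow> seq \<Rightarrow> seq \<Rightarrow> bool" where
  "inference1 Ac X1 X \<longleftrightarrow>
     (\<forall>X1'. erase_ms X1' = erase_ms X1 \<longrightarrow>
        (\<exists>X'. erase_ms X' = erase_ms X \<and> (\<forall>C. der Ac (fill C X1') \<longrightarrow> der Ac (fill C X'))))"

definition inference2 :: "fm \<Rightarrow> seq \<Rightarrow> seq \<Rightarrow> seq \<Rightarrow> bool" where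
  "inference2 Ac X1 X2 X \<longleftrightarrow>
     (\<forall>X1' X2'. erase_ms X1' = erase_ms X1 \<longrightarrow> erase_ms X2' = erase_ms X2 \<longrightarrow>
        (\<exists>X'. erase_ms X' = erase_ms X \<and>
           (\<forall>C1 C2 C. der Ac (fill C1 X1') \<longrightarrow> der Ac (fill C2 X2') \<longrightarrow> merge_ctx C1 C2 C \<longrightarrow>
              der Ac (fill C X'))))"

lemma inference1E:
  assumes "inference1 Ac X1 X" "erase_ms X1' = erase_ms X1"
  obtains X' where "erase_ms X' = erase_ms X" "\<And>C. der Ac (fill C X1') \<Longrightarrow> der Ac (fill C X')"
proof -
  from assms obtain X' where
    "erase_ms X' = erase_ms X \<and> (\<forall>C. der Ac (fill C X1') \<longrightarrow> der Ac (fill C X'))"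
    unfolding inference1_def by blast
  then show thesis using that by blast
qed

lemma inference2E:
  assumes "inference2 Ac X1 X2 X" "erase_ms X1' = erase_ms X1" "erase_ms X2' = erase_ms X2"
  obtains X' where "erase_ms X' = erase_ms X"
    "\<And>C1 C2 C. der Ac (fill C1 X1') \<Longrightarrow> der Ac (fill C2 X2') \<Longrightarrow> merge_ctx C1 C2 C \<Longrightarrow> der Ac (fill C X')"
proof -
  from assms obtain X' where "erase_ms X' = erase_ms X \<and>
      (\<forall>C1 C2 C. der Ac (fill C1 X1') \<longrightarrow> der Ac (fill C2 X2') \<longrightarrow> merge_ctx C1 C2 C \<longrightarrow>
          der Ac (fill C X'))"
    unfolding inference2_def by blast
  then show thesis using that by blast
qed

lemma weakened_derivable_inference1_in_item:
  assumes IH: "weakening_admissible Ac E B (fill C X1)"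
    and inf: "inference1 Ac X1 X"
    and free: "bracket_free B X \<Longrightarrow> bracket_free B X1"
    and C: "C = comp_ctx G (CBr {#} (add_top {#D E \<Sigma>#} Q) b)"
    and \<Delta>: "bracket_free B (fill Q X)"
  shows "weakened_derivable Ac E B G \<Sigma> (fill Q X) b"
proof -
  have "bracket_free B (fill Q X1)"
    using \<Delta> free bracket_free_fill[of B Q X] bracket_free_fill[of B Q X1] by simp
  with IH C have "weakened_derivable Ac E B G \<Sigma> (fill Q X1) b"
    by (intro weakening_admissibleD) simp_all
  then obtain G' Q' X1' \<Sigma>' Y where g: "erase_ctx G' = erase_ctx G" "erase_ctx Q' = erase_ctx Q"
      "erase_ms X1' = erase_ms X1" "\<Sigma>' |\<subseteq>| \<Sigma> |-| {|B|}"
      "der Ac (fill (comp_ctx G' (CBr {#} (add_top {#D E \<Sigma>', D (neg B) Y#} Q') b)) X1')"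
    by (rule weakened_derivable_fillE)
  obtain X' where X': "erase_ms X' = erase_ms X" "\<And>C. der Ac (fill C X1') \<Longrightarrow> der Ac (fill C X')"
    using inference1E[OF inf g(3)] by blast
  from X'(2)[OF g(5)] have d: "der Ac (fill G' {#Br ({#D E \<Sigma>', D (neg B) Y#} + fill Q' X') b#})"
    by simp
  show ?thesis
    by (rule weakened_derivableI[OF g(1) _ g(4) d]) (simp add: g(2) X'(1))
qed

lemma weakened_derivable_inference1_disjoint:
  assumes IH: "weakening_admissible Ac E B (fill C X1)"
    and inf: "inference1 Ac X1 X"
    and C: "C = comp_ctx R (add_top (M + fill Gb {#Br (add_mset (D E \<Sigma>) \<Delta>) b#}) Cb)"
    and \<Delta>: "bracket_free B \<Delta>"
  shows "weakened_derivable Ac E B (comp_ctx R (add_top (M + fill Cb X) Gb)) \<Sigma> \<Delta> b"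
proof -
  have "fill C X1 = fill (comp_ctx R (add_top (M + fill Cb X1) Gb)) {#Br (add_mset (D E \<Sigma>) \<Delta>) b#}"
    using C by (simp add: ac_simps)
  with IH \<Delta> have "weakened_derivable Ac E B (comp_ctx R (add_top (M + fill Cb X1) Gb)) \<Sigma> \<Delta> b"
    by (metis weakening_admissibleD)
  then obtain R' M' Gb' Cb' X1' \<Sigma>' Y \<Delta>' where g: "erase_ctx R' = erase_ctx R"
      "erase_ms M' = erase_ms M"
      "erase_ctx Gb' = erase_ctx Gb" "erase_ctx Cb' = erase_ctx Cb" "erase_ms X1' = erase_ms X1"
      "erase_ms \<Delta>' = erase_ms \<Delta>" "\<Sigma>' |\<subseteq>| \<Sigma> |-| {|B|}"
      "der Ac (fill (comp_ctx R' (add_top (M' + fill Gb' {#Br ({#D E \<Sigma>', D (neg B) Y#} + \<Delta>') b#})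
          Cb')) X1')"
    by (rule weakened_derivable_disjointE)
  obtain X' where X': "erase_ms X' = erase_ms X" "\<And>C. der Ac (fill C X1') \<Longrightarrow> der Ac (fill C X')"
    using inference1E[OF inf g(5)] by blast
  from X'(2)[OF g(8)]
  have d: "der Ac (fill (comp_ctx R' (add_top (M' + fill Cb' X') Gb'))
      {#Br ({#D E \<Sigma>', D (neg B) Y#} + \<Delta>') b#})"
    by (simp add: ac_simps)
  show ?thesis
    by (rule weakened_derivableI[OF _ g(6) g(7) d]) (simp add: g X'(1))
qed

lemma weakening_admissible_inference1:
  assumes IH: "weakening_admissible Ac E B (fill C X1)"
    and inf: "inference1 Ac X1 {#F A#}"
    and free: "bracket_free B X1"
  shows "weakening_admissible Ac E B (fill C {#F A#})"
  unfolding weakening_admissible_def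
proof (intro allI impI)
  fix G \<Sigma> \<Delta> b
  assume eq: "fill C {#F A#} = fill G {#Br (add_mset (D E \<Sigma>) \<Delta>) b#}" and \<Delta>: "bracket_free B \<Delta>"
  from eq show "weakened_derivable Ac E B G \<Sigma> \<Delta> b"
  proof (cases rule: fill_eq_fillE)
    case (hole_in_item Q Z c)
    then have "add_mset (D E \<Sigma>) \<Delta> = fill Q {#F A#}" by simp
    then have "D E \<Sigma> \<in># fill Q {#F A#}" by (metis union_single_eq_member)
    then obtain Q' where "Q = add_top {#D E \<Sigma>#} Q'" using mem_fill_cases by fastforce
    moreover have "\<Delta> = fill Q' {#F A#}" using hole_in_item calculation by simp
    ultimately show ?thesis using hole_in_item \<Delta>
      by (metis weakened_derivable_inference1_in_item[OF IH inf] free item.inject(3))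
  next
    case (item_in_filler Q)
    then have "\<exists>M c. Br M c \<in># {#F A#}" using fill_singleton_has_bracket by metis
    then show ?thesis by simp
  next
    case (disjoint R M Cb Gb)
    with \<Delta> show ?thesis by (auto intro: weakened_derivable_inference1_disjoint[OF IH inf])
  qed
qed

lemma merge_ctx_in_item_inv:
  assumes "merge_ctx C1 C2 (comp_ctx G (CBr {#} (add_top {#D E \<Sigma>#} Q) b))"
  shows "\<exists>G1 G2 Q1 Q2 \<Sigma>1 \<Sigma>2. C1 = comp_ctx G1 (CBr {#} (add_top {#D E \<Sigma>1#} Q1) b) \<and>
     C2 = comp_ctx G2 (CBr {#} (add_top {#D E \<Sigma>2#} Q2) b) \<and> merge_ctx G1 G2 G \<and> merge_ctx Q1 Q2 Q \<and>
     \<Sigma> = \<Sigma>1 |\<union>| \<Sigma>2"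
proof -
  obtain G1 G2 H1 H2 where a: "C1 = comp_ctx G1 H1" "C2 = comp_ctx G2 H2" "merge_ctx G1 G2 G"
      "merge_ctx H1 H2 (CBr {#} (add_top {#D E \<Sigma>#} Q) b)"
    using merge_ctx_comp_ctx_inv[OF assms] by blast
  obtain K1 K2 P1 P2 where b: "H1 = CBr K1 P1 b" "H2 = CBr K2 P2 b" "merge_ms K1 K2 {#}"
      "merge_ctx P1 P2 (add_top {#D E \<Sigma>#} Q)"
    using merge_ctx_CBr_inv[OF a(4)] by blast
  obtain N1 N2 Q1 Q2 where c: "P1 = add_top N1 Q1" "P2 = add_top N2 Q2" "merge_ms N1 N2 {#D E \<Sigma>#}"
      "merge_ctx Q1 Q2 Q"
    using merge_ctx_add_top_inv[OF b(4)] by blast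
  obtain n1 n2 where d: "N1 = {#n1#}" "N2 = {#n2#}" "merge_item n1 n2 (D E \<Sigma>)"
    using merge_ms_single_inv[OF c(3)] by blast
  obtain S1 S2 where "n1 = D E S1" "n2 = D E S2" "\<Sigma> = S1 |\<union>| S2"
    using merge_item_D_inv[OF d(3)] by blast
  with a b c d show ?thesis using merge_ms_empty_inv[OF b(3)] by blast
qed

lemma merge_ctx_disjoint_inv:
  assumes "merge_ctx C1 C2 (comp_ctx R (add_top (M + fill Gb {#Br (add_mset (D E \<Sigma>) \<Delta>) b#}) Cb))"
  shows "\<exists>R1 R2 M1 M2 Gb1 Gb2 \<Sigma>1 \<Sigma>2 \<Delta>1 \<Delta>2 Cb1 Cb2.
     C1 = comp_ctx R1 (add_top (M1 + fill Gb1 {#Br (add_mset (D E \<Sigma>1) \<Delta>1) b#}) Cb1) \<and>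
     C2 = comp_ctx R2 (add_top (M2 + fill Gb2 {#Br (add_mset (D E \<Sigma>2) \<Delta>2) b#}) Cb2) \<and>
     merge_ctx R1 R2 R \<and> merge_ms M1 M2 M \<and> merge_ctx Gb1 Gb2 Gb \<and> merge_ms \<Delta>1 \<Delta>2 \<Delta> \<and>
     merge_ctx Cb1 Cb2 Cb \<and> \<Sigma> = \<Sigma>1 |\<union>| \<Sigma>2"
proof -
  obtain R1 R2 H1 H2 where a: "C1 = comp_ctx R1 H1" "C2 = comp_ctx R2 H2" "merge_ctx R1 R2 R"
      "merge_ctx H1 H2 (add_top (M + fill Gb {#Br (add_mset (D E \<Sigma>) \<Delta>) b#}) Cb)"
    using merge_ctx_comp_ctx_inv[OF assms] by blast
  obtain N1 N2 Cb1 Cb2 where b: "H1 = add_top N1 Cb1" "H2 = add_top N2 Cb2"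
      "merge_ms N1 N2 (M + fill Gb {#Br (add_mset (D E \<Sigma>) \<Delta>) b#})" "merge_ctx Cb1 Cb2 Cb"
    using merge_ctx_add_top_inv[OF a(4)] by blast
  obtain M1 W1 M2 W2 where c: "N1 = M1 + W1" "N2 = M2 + W2" "merge_ms M1 M2 M"
      "merge_ms W1 W2 (fill Gb {#Br (add_mset (D E \<Sigma>) \<Delta>) b#})"
    using merge_ms_split[OF b(3) refl] by blast
  obtain Gb1 Gb2 Y1 Y2 where d: "W1 = fill Gb1 Y1" "W2 = fill Gb2 Y2" "merge_ctx Gb1 Gb2 Gb"
      "merge_ms Y1 Y2 {#Br (add_mset (D E \<Sigma>) \<Delta>) b#}"
    using merge_fill_inv[OF c(4)] by blast
  obtain y1 y2 where e: "Y1 = {#y1#}" "Y2 = {#y2#}" "merge_item y1 y2 (Br (add_mset (D E \<Sigma>) \<Delta>) b)"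
    using merge_ms_single_inv[OF d(4)] by blast
  obtain Z1 Z2 where f: "y1 = Br Z1 b" "y2 = Br Z2 b" "merge_ms Z1 Z2 (add_mset (D E \<Sigma>) \<Delta>)"
    using merge_item_Br_inv[OF e(3)] by blast
  obtain z1 z2 \<Delta>1 \<Delta>2 where g: "Z1 = add_mset z1 \<Delta>1" "Z2 = add_mset z2 \<Delta>2"
      "merge_item z1 z2 (D E \<Sigma>)" "merge_ms \<Delta>1 \<Delta>2 \<Delta>"
    using merge_ms_add_inv[OF f(3)] by blast
  obtain S1 S2 where "z1 = D E S1" "z2 = D E S2" "\<Sigma> = S1 |\<union>| S2"
    using merge_item_D_inv[OF g(3)] by blast
  with a b c d e f g show ?thesis by (intro exI) auto
qed

lemma merge_ms_weakened_pair:
  "merge_ms {#D E S1, D E' T1#} {#D E S2, D E' T2#} {#D E (S1 |\<union>| S2), D E' (T1 |\<union>| T2)#}"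
  by (intro merge_ms_add merge_ms_single merge_item_merge_ms.intros)

lemma weakened_derivable_inference2_in_item:
  assumes IH1: "weakening_admissible Ac E B (fill C1 X1)"
    and IH2: "weakening_admissible Ac E B (fill C2 X2)"
    and inf: "inference2 Ac X1 X2 X"
    and m: "merge_ctx C1 C2 (comp_ctx G (CBr {#} (add_top {#D E \<Sigma>#} Q) b))"
    and free: "bracket_free B X1" "bracket_free B X2"
    and \<Delta>: "bracket_free B (fill Q X)"
  shows "weakened_derivable Ac E B G \<Sigma> (fill Q X) b"
proof -
  obtain G1 G2 Q1 Q2 \<Sigma>1 \<Sigma>2 where mc: "C1 = comp_ctx G1 (CBr {#} (add_top {#D E \<Sigma>1#} Q1) b)"
      "C2 = comp_ctx G2 (CBr {#} (add_top {#D E \<Sigma>2#} Q2) b)" "merge_ctx G1 G2 G" "merge_ctx Q1 Q2 Q"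
      "\<Sigma> = \<Sigma>1 |\<union>| \<Sigma>2"
    using merge_ctx_in_item_inv[OF m] by blast
  note eG = merge_ctx_erase[OF mc(3)] and eQ = merge_ctx_erase[OF mc(4)]
  have "bracket_free B (fill Q {#})" using \<Delta> bracket_free_fill by blast
  then have "bracket_free B (fill Qi {#})" if "erase_ctx Qi = erase_ctx Q" for Qi
    using that bracket_free_erase[of "fill Qi {#}" "fill Q {#}" B] by simp
  then have "bracket_free B (fill Q1 X1)" "bracket_free B (fill Q2 X2)"
    using eQ free bracket_free_fill by blast+
  with IH1 IH2 mc have "weakened_derivable Ac E B G1 \<Sigma>1 (fill Q1 X1) b"
    "weakened_derivable Ac E B G2 \<Sigma>2 (fill Q2 X2) b"
    by (auto intro: weakening_admissibleD)
  then obtain G1' Q1' X1' \<Sigma>1' Y1 G2' Q2' X2' \<Sigma>2' Y2 where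
    g1: "erase_ctx G1' = erase_ctx G1" "erase_ctx Q1' = erase_ctx Q1" "erase_ms X1' = erase_ms X1"
      "\<Sigma>1' |\<subseteq>| \<Sigma>1 |-| {|B|}"
      "der Ac (fill (comp_ctx G1' (CBr {#} (add_top {#D E \<Sigma>1', D (neg B) Y1#} Q1') b)) X1')" and
    g2: "erase_ctx G2' = erase_ctx G2" "erase_ctx Q2' = erase_ctx Q2" "erase_ms X2' = erase_ms X2"
      "\<Sigma>2' |\<subseteq>| \<Sigma>2 |-| {|B|}"
      "der Ac (fill (comp_ctx G2' (CBr {#} (add_top {#D E \<Sigma>2', D (neg B) Y2#} Q2') b)) X2')"
    by (elim weakened_derivable_fillE)
  obtain X' where X': "erase_ms X' = erase_ms X" "\<And>C1 C2 C. der Ac (fill C1 X1') \<Longrightarrow>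
      der Ac (fill C2 X2') \<Longrightarrow> merge_ctx C1 C2 C \<Longrightarrow> der Ac (fill C X')"
    using inference2E[OF inf g1(3) g2(3)] by blast
  obtain G' Q' where mG: "merge_ctx G1' G2' G'" and mQ: "merge_ctx Q1' Q2' Q'"
    using merge_ctx_exists g1(1,2) g2(1,2) eG eQ by metis
  have "der Ac (fill (comp_ctx G' (CBr {#}
      (add_top {#D E (\<Sigma>1' |\<union>| \<Sigma>2'), D (neg B) (Y1 |\<union>| Y2)#} Q') b)) X')"
    by (rule X'(2)[OF g1(5) g2(5)])
      (intro merge_ctx_comp_ctx mG merge_ctx.intros merge_ctx_add_top mQ merge_ms_weakened_pair
        merge_item_merge_ms.intros)
  then have d: "der Ac (fill G' {#Br ({#D E (\<Sigma>1' |\<union>| \<Sigma>2'), D (neg B) (Y1 |\<union>| Y2)#} +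
      fill Q' X') b#})"
    by simp
  show ?thesis
  proof (rule weakened_derivableI[OF _ _ _ d])
    show "erase_ctx G' = erase_ctx G" using merge_ctx_erase[OF mG] g1(1) eG by simp
    show "erase_ms (fill Q' X') = erase_ms (fill Q X)"
        using merge_ctx_erase[OF mQ] g1(2) eQ X'(1) by simp
    show "\<Sigma>1' |\<union>| \<Sigma>2' |\<subseteq>| \<Sigma> |-| {|B|}" using g1(4) g2(4) mc(5) by auto
  qed
qed

lemma weakened_derivable_inference2_disjoint:
  assumes IH1: "weakening_admissible Ac E B (fill C1 X1)"
    and IH2: "weakening_admissible Ac E B (fill C2 X2)"
    and inf: "inference2 Ac X1 X2 X"
    and m: "merge_ctx C1 C2 (comp_ctx R (add_top (M + fill Gb {#Br (add_mset (D E \<Sigma>) \<Delta>) b#}) Cb))"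
    and \<Delta>: "bracket_free B \<Delta>"
  shows "weakened_derivable Ac E B (comp_ctx R (add_top (M + fill Cb X) Gb)) \<Sigma> \<Delta> b"
proof -
  obtain R1 R2 M1 M2 Gb1 Gb2 \<Sigma>1 \<Sigma>2 \<Delta>1 \<Delta>2 Cb1 Cb2 where mc:
      "C1 = comp_ctx R1 (add_top (M1 + fill Gb1 {#Br (add_mset (D E \<Sigma>1) \<Delta>1) b#}) Cb1)"
      "C2 = comp_ctx R2 (add_top (M2 + fill Gb2 {#Br (add_mset (D E \<Sigma>2) \<Delta>2) b#}) Cb2)"
      "merge_ctx R1 R2 R" "merge_ms M1 M2 M" "merge_ctx Gb1 Gb2 Gb" "merge_ms \<Delta>1 \<Delta>2 \<Delta>"
      "merge_ctx Cb1 Cb2 Cb" "\<Sigma> = \<Sigma>1 |\<union>| \<Sigma>2"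
    using merge_ctx_disjoint_inv[OF m] by blast
  note eR = merge_ctx_erase[OF mc(3)] and eM = merge_ms_erase[OF mc(4)]
    and eGb = merge_ctx_erase[OF mc(5)] and e\<Delta> = merge_ms_erase[OF mc(6)]
    and eCb = merge_ctx_erase[OF mc(7)]
  have "weakened_derivable Ac E B (comp_ctx R1 (add_top (M1 + fill Cb1 X1) Gb1)) \<Sigma>1 \<Delta>1 b"
    using IH1 mc(1) \<Delta> bracket_free_erase[of \<Delta>1 \<Delta>] e\<Delta>
    by (intro weakening_admissibleD) (simp_all add: ac_simps)
  then obtain R1' M1' Gb1' Cb1' X1' \<Sigma>1' Y1 \<Delta>1' where g1: "erase_ctx R1' = erase_ctx R1"
      "erase_ms M1' = erase_ms M1" "erase_ctx Gb1' = erase_ctx Gb1" "erase_ctx Cb1' = erase_ctx Cb1"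
      "erase_ms X1' = erase_ms X1" "erase_ms \<Delta>1' = erase_ms \<Delta>1" "\<Sigma>1' |\<subseteq>| \<Sigma>1 |-| {|B|}"
      "der Ac (fill (comp_ctx R1' (add_top (M1' + fill
          Gb1' {#Br ({#D E \<Sigma>1', D (neg B) Y1#} + \<Delta>1') b#}) Cb1')) X1')"
    by (rule weakened_derivable_disjointE)
  have "weakened_derivable Ac E B (comp_ctx R2 (add_top (M2 + fill Cb2 X2) Gb2)) \<Sigma>2 \<Delta>2 b"
    using IH2 mc(2) \<Delta> bracket_free_erase[of \<Delta>2 \<Delta>] e\<Delta>
    by (intro weakening_admissibleD) (simp_all add: ac_simps)
  then obtain R2' M2' Gb2' Cb2' X2' \<Sigma>2' Y2 \<Delta>2' where g2: "erase_ctx R2' = erase_ctx R2"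
      "erase_ms M2' = erase_ms M2" "erase_ctx Gb2' = erase_ctx Gb2" "erase_ctx Cb2' = erase_ctx Cb2"
      "erase_ms X2' = erase_ms X2" "erase_ms \<Delta>2' = erase_ms \<Delta>2" "\<Sigma>2' |\<subseteq>| \<Sigma>2 |-| {|B|}"
      "der Ac (fill (comp_ctx R2' (add_top (M2' + fill
          Gb2' {#Br ({#D E \<Sigma>2', D (neg B) Y2#} + \<Delta>2') b#}) Cb2')) X2')"
    by (rule weakened_derivable_disjointE)
  obtain X' where X': "erase_ms X' = erase_ms X" "\<And>C1 C2 C. der Ac (fill C1 X1') \<Longrightarrow>
      der Ac (fill C2 X2') \<Longrightarrow> merge_ctx C1 C2 C \<Longrightarrow> der Ac (fill C X')"
    using inference2E[OF inf g1(5) g2(5)] by blast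
  obtain R' M' Gb' \<Delta>' Cb' where mR: "merge_ctx R1' R2' R'" and mM: "merge_ms M1' M2' M'"
      and mGb: "merge_ctx Gb1' Gb2' Gb'" and m\<Delta>: "merge_ms \<Delta>1' \<Delta>2' \<Delta>'"
          and mCb: "merge_ctx Cb1' Cb2' Cb'"
    using merge_ctx_exists merge_ms_exists g1(1-4,6) g2(1-4,6) eR eM eGb e\<Delta> eCb by metis
  let ?y = "Br ({#D E (\<Sigma>1' |\<union>| \<Sigma>2'), D (neg B) (Y1 |\<union>| Y2)#} + \<Delta>') b"
  have "der Ac (fill (comp_ctx R' (add_top (M' + fill Gb' {#?y#}) Cb')) X')"
    by (rule X'(2)[OF g1(8) g2(8)])
      (intro merge_ctx_comp_ctx mR merge_ctx_add_top mCb merge_ms_plus mM merge_fill mGb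
        merge_ms_single merge_item_merge_ms.intros(3) m\<Delta> merge_ms_weakened_pair)
  then have d: "der Ac (fill (comp_ctx R' (add_top (M' + fill Cb' X') Gb')) {#?y#})"
    by (simp add: ac_simps)
  show ?thesis
  proof (rule weakened_derivableI[OF _ _ _ d])
    show "erase_ctx (comp_ctx R' (add_top (M' + fill Cb' X') Gb')) =
        erase_ctx (comp_ctx R (add_top (M + fill Cb X) Gb))"
      using merge_ctx_erase[OF mR] merge_ms_erase[OF mM] merge_ctx_erase[OF mGb]
        merge_ctx_erase[OF mCb] g1 eR eM eGb eCb X'(1) by simp
    show "erase_ms \<Delta>' = erase_ms \<Delta>" using merge_ms_erase[OF m\<Delta>] g1(6) e\<Delta> by simp
    show "\<Sigma>1' |\<union>| \<Sigma>2' |\<subseteq>| \<Sigma> |-| {|B|}" using g1(7) g2(7) mc(8) by auto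
  qed
qed

lemma weakening_admissible_inference2:
  assumes IH1: "weakening_admissible Ac E B (fill C1 X1)"
    and IH2: "weakening_admissible Ac E B (fill C2 X2)"
    and inf: "inference2 Ac X1 X2 X"
    and m: "merge_ctx C1 C2 C"
    and plain: "set_mset X \<subseteq> range F"
    and free: "bracket_free B X1" "bracket_free B X2"
  shows "weakening_admissible Ac E B (fill C X)"
  unfolding weakening_admissible_def
proof (intro allI impI)
  fix G \<Sigma> \<Delta> b
  assume eq: "fill C X = fill G {#Br (add_mset (D E \<Sigma>) \<Delta>) b#}" and \<Delta>: "bracket_free B \<Delta>"
  from eq show "weakened_derivable Ac E B G \<Sigma> \<Delta> b"
  proof (cases rule: fill_eq_fillE)
    case (hole_in_item Q Z c)
    then have "add_mset (D E \<Sigma>) \<Delta> = fill Q X" by simp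
    moreover from this have "D E \<Sigma> \<in># fill Q X" by (metis union_single_eq_member)
    then obtain Q' where "Q = add_top {#D E \<Sigma>#} Q'"
      using mem_fill_cases plain by fastforce
    ultimately show ?thesis using hole_in_item \<Delta> m
      by (simp add: weakened_derivable_inference2_in_item[OF IH1 IH2 inf _ free])
  next
    case (item_in_filler Q)
    then have "\<exists>M c. Br M c \<in># X" using fill_singleton_has_bracket by metis
    then show ?thesis using plain by auto
  next
    case (disjoint R M Cb Gb)
    with \<Delta> m show ?thesis by (auto intro: weakened_derivable_inference2_disjoint[OF IH1 IH2 inf])
  qed
qed

section \<open>The diamond rule\<close>

lemma lift_dia_premise:
  "erase_ms X1 = erase_ms (add_mset (D A S) (fill Dc {#Br (add_mset (fitem A Xa) M) c#})) \<Longrightarrow>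
   \<exists>S' Dc' Xa' M'. X1 = add_mset (D A S') (fill Dc' {#Br (add_mset (fitem A Xa') M') c#}) \<and>
     erase_ctx Dc' = erase_ctx Dc \<and> erase_ms M' = erase_ms M"
proof -
  assume "erase_ms X1 = erase_ms (add_mset (D A S) (fill Dc {#Br (add_mset (fitem A Xa) M) c#}))"
  then obtain w W where w: "X1 = add_mset w W" "erase w = D A {||}"
      "erase_ms W = erase_ms (fill Dc {#Br (add_mset (fitem A Xa) M) c#})"
    by (auto dest!: lift_add_mset)
  obtain Dc' Z where "W = fill Dc' Z" "erase_ctx Dc' = erase_ctx Dc"
      "erase_ms Z = erase_ms {#Br (add_mset (fitem A Xa) M) c#}"
    using lift_fill[OF w(3)] by blast
  with w show ?thesis by (metis erase_eq_D lift_bracket_fitem)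
qed

lemma inference1_dia:
  "inference1 Ac (add_mset (D A S) (fill Dc {#Br (add_mset (fitem A Xa) M) c#}))
     (add_mset (D A (finsert c S)) (fill Dc {#Br M c#}))"
  unfolding inference1_def
proof (intro allI impI)
  fix X1 assume "erase_ms X1 = erase_ms (add_mset (D A S)
      (fill Dc {#Br (add_mset (fitem A Xa) M) c#}))"
  then obtain S' Dc' Xa' M'
      where l: "X1 = add_mset (D A S') (fill Dc' {#Br (add_mset (fitem A Xa') M') c#})"
      "erase_ctx Dc' = erase_ctx Dc" "erase_ms M' = erase_ms M"
    using lift_dia_premise by blast
  then show "\<exists>X'. erase_ms X' = erase_ms (add_mset (D A (finsert c S)) (fill Dc {#Br M c#})) \<and>
      (\<forall>C. der Ac (fill C X1) \<longrightarrow> der Ac (fill C X'))"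
    by (intro exI[of _ "add_mset (D A (finsert c S')) (fill Dc' {#Br M' c#})"])
        (auto intro: der.dia)
qed

lemma weakened_derivable_dia_principal:
  assumes IH: "weakening_admissible Ac A B (fill G {#Br (add_mset (D A S) (N +
      fill Dc {#Br (add_mset (fitem A Xa) M) c#})) b#})"
    and \<Delta>: "bracket_free B (N + fill Dc {#Br M c#})"
  shows "weakened_derivable Ac A B G (finsert c S) (N + fill Dc {#Br M c#}) b"
proof -
  have "bracket_free B (N + fill Dc {#Br (add_mset (fitem A Xa) M) c#})"
    using \<Delta> bracket_free_fill[of B Dc "{#Br (add_mset (fitem A Xa) M) c#}"]
      bracket_free_fill[of B Dc "{#Br M c#}"] by simp
  with IH have "weakened_derivable Ac A B G S (N + fill Dc {#Br (add_mset (fitem A Xa) M) c#}) b"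
    by (rule weakening_admissibleD)
  then obtain G' \<Delta>1 S' Y where g: "erase_ctx G' = erase_ctx G"
      "erase_ms \<Delta>1 = erase_ms (N + fill Dc {#Br (add_mset (fitem A Xa) M) c#})" "S' |\<subseteq>| S |-| {|B|}"
      "der Ac (fill G' {#Br ({#D A S', D (neg B) Y#} + \<Delta>1) b#})"
    unfolding weakened_derivable_def by blast
  obtain N' W where l1: "\<Delta>1 = N' + W" "erase_ms N' = erase_ms N"
      "erase_ms W = erase_ms (fill Dc {#Br (add_mset (fitem A Xa) M) c#})"
    using lift_plus[of \<Delta>1 "erase_ms N"] g(2) by auto
  obtain Dc' Z where l2: "W = fill Dc' Z" "erase_ctx Dc' = erase_ctx Dc"
      "erase_ms Z = erase_ms {#Br (add_mset (fitem A Xa) M) c#}"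
    using lift_fill[OF l1(3)] by blast
  obtain Xa' M' where l3: "Z = {#Br (add_mset (fitem A Xa') M') c#}" "erase_ms M' = erase_ms M"
    using lift_bracket_fitem[OF l2(3)] by blast
  have "der Ac (fill (comp_ctx G' (CBr {#} (Hole (add_mset (D (neg B) Y) N')) b))
      (add_mset (D A S') (fill Dc' {#Br (add_mset (fitem A Xa') M') c#})))"
    using g(4) l1(1) l2(1) l3(1) by (simp add: ac_simps)
  from der.dia[OF this]
  have d: "der Ac (fill G' {#Br ({#D A (finsert c S'), D (neg B) Y#} +
      (N' + fill Dc' {#Br M' c#})) b#})"
    by (simp add: ac_simps)
  have "B \<noteq> c" using \<Delta> bracket_free_fill[of B Dc "{#Br M c#}"] by simp
  then show ?thesis
    by (intro weakened_derivableI[OF g(1) _ _ d]) (use g(3) l1(2) l2(2) l3(2) in auto)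
qed

lemma weakened_derivable_dia_enclosing:
  assumes IH: "weakening_admissible Ac E B (fill Gr (add_mset (D A S)
      (fill (comp_ctx Q0 (CBr {#} (add_top {#D E \<Sigma>#} Q1) b)) {#Br (add_mset (fitem A Xa) M) c#})))"
    and \<Delta>: "bracket_free B (fill Q1 {#Br M c#})"
  shows "weakened_derivable Ac E B (comp_ctx Gr (add_top {#D A (finsert c S)#} Q0)) \<Sigma>
      (fill Q1 {#Br M c#}) b"
proof -
  have "bracket_free B (fill Q1 {#Br (add_mset (fitem A Xa) M) c#})"
    using \<Delta> bracket_free_fill[of B Q1 "{#Br (add_mset (fitem A Xa) M) c#}"]
      bracket_free_fill[of B Q1 "{#Br M c#}"] by simp
  with IH have "weakened_derivable Ac E B (comp_ctx Gr (add_top {#D A S#} Q0)) \<Sigma>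
      (fill Q1 {#Br (add_mset (fitem A Xa) M) c#}) b"
    by (intro weakening_admissibleD) simp_all
  then obtain G' Q1' Z \<Sigma>' Y where g: "erase_ctx G' = erase_ctx (comp_ctx Gr (add_top {#D A S#} Q0))"
      "erase_ctx Q1' = erase_ctx Q1" "erase_ms Z = erase_ms {#Br (add_mset (fitem A Xa) M) c#}"
      "\<Sigma>' |\<subseteq>| \<Sigma> |-| {|B|}"
      "der Ac (fill (comp_ctx G' (CBr {#} (add_top {#D E \<Sigma>', D (neg B) Y#} Q1') b)) Z)"
    by (rule weakened_derivable_fillE)
  obtain Gr' H' where l1: "G' = comp_ctx Gr' H'" "erase_ctx Gr' = erase_ctx Gr"
      "erase_ctx H' = erase_ctx (add_top {#D A S#} Q0)"
    using lift_comp_ctx[OF g(1)] by blast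
  obtain N' Q0' where l2: "H' = add_top N' Q0'" "erase_ms N' = erase_ms {#D A S#}"
      "erase_ctx Q0' = erase_ctx Q0"
    using lift_add_top[OF l1(3)] by blast
  obtain S' where l3: "N' = {#D A S'#}" using lift_single_D l2(2) by auto
  obtain Xa' M' where l4: "Z = {#Br (add_mset (fitem A Xa') M') c#}" "erase_ms M' = erase_ms M"
    using lift_bracket_fitem[OF g(3)] by blast
  have "der Ac (fill Gr' (add_mset (D A S') (fill (comp_ctx Q0' (CBr {#}
      (add_top {#D E \<Sigma>', D (neg B) Y#} Q1') b)) {#Br (add_mset (fitem A Xa') M') c#})))"
    using g(5) l1(1) l2(1) l3 l4(1) by simp
  from der.dia[OF this]
  have d: "der Ac (fill (comp_ctx Gr' (add_top {#D A (finsert c S')#} Q0'))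
      {#Br ({#D E \<Sigma>', D (neg B) Y#} + fill Q1' {#Br M' c#}) b#})"
    by simp
  show ?thesis
    by (rule weakened_derivableI[OF _ _ g(4) d]) (simp_all add: l1(2) l2(3) g(2) l4(2))
qed

lemma weakened_derivable_dia_into_item:
  assumes IH: "weakening_admissible Ac E B (fill Gr (add_mset (D A S)
      (fill Dc {#Br (add_mset (fitem A Xa) (add_mset (D E \<Sigma>) \<Delta>)) c#})))"
    and \<Delta>: "bracket_free B \<Delta>"
  shows "weakened_derivable Ac E B (comp_ctx Gr (add_top {#D A (finsert c S)#} Dc)) \<Sigma> \<Delta> c"
proof -
  have "weakened_derivable Ac E B (comp_ctx Gr (add_top {#D A S#} Dc))
      \<Sigma> (add_mset (fitem A Xa) \<Delta>) c"
    using IH \<Delta> by (intro weakening_admissibleD) (simp_all add: add_mset_commute)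
  then obtain G' \<Delta>1 \<Sigma>' Y where g: "erase_ctx G' = erase_ctx (comp_ctx Gr (add_top {#D A S#} Dc))"
      "erase_ms \<Delta>1 = erase_ms (add_mset (fitem A Xa) \<Delta>)" "\<Sigma>' |\<subseteq>| \<Sigma> |-| {|B|}"
      "der Ac (fill G' {#Br ({#D E \<Sigma>', D (neg B) Y#} + \<Delta>1) c#})"
    unfolding weakened_derivable_def by blast
  obtain Gr' H' where l1: "G' = comp_ctx Gr' H'" "erase_ctx Gr' = erase_ctx Gr"
      "erase_ctx H' = erase_ctx (add_top {#D A S#} Dc)"
    using lift_comp_ctx[OF g(1)] by blast
  obtain N' Dc' where l2: "H' = add_top N' Dc'" "erase_ms N' = erase_ms {#D A S#}"
      "erase_ctx Dc' = erase_ctx Dc"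
    using lift_add_top[OF l1(3)] by blast
  obtain S' where l3: "N' = {#D A S'#}" using lift_single_D l2(2) by auto
  obtain w \<Delta>' where l4: "\<Delta>1 = add_mset w \<Delta>'" "erase w = fitem A {||}" "erase_ms \<Delta>' = erase_ms \<Delta>"
    using lift_add_mset[of \<Delta>1 "fitem A {||}" "erase_ms \<Delta>"] g(2) by auto
  obtain Xa' where l5: "w = fitem A Xa'" using erase_eq_fitem[OF l4(2)] by blast
  have "der Ac (fill Gr' (add_mset (D A S')
      (fill Dc' {#Br (add_mset (fitem A Xa') ({#D E \<Sigma>', D (neg B) Y#} + \<Delta>')) c#})))"
    using g(4) l1(1) l2(1) l3 l4(1) l5 by (simp add: add_mset_commute)
  from der.dia[OF this]
  have d: "der Ac (fill (comp_ctx Gr' (add_top {#D A (finsert c S')#} Dc'))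
      {#Br ({#D E \<Sigma>', D (neg B) Y#} + \<Delta>') c#})"
    by simp
  show ?thesis
    by (rule weakened_derivableI[OF _ l4(3) g(3) d]) (simp add: l1(2) l2(3))
qed

lemma weakened_derivable_dia_inside_item:
  assumes IH: "weakening_admissible Ac E B (fill Gr (add_mset (D A S)
      (fill Dc {#Br (add_mset (fitem A Xa) (fill Q {#Br (add_mset (D E \<Sigma>) \<Delta>) b#})) c#})))"
    and \<Delta>: "bracket_free B \<Delta>"
  shows "weakened_derivable Ac E B (comp_ctx Gr (add_top {#D A (finsert c S)#}
      (comp_ctx Dc (CBr {#} Q c)))) \<Sigma> \<Delta> b"
proof -
  let ?K = "add_top {#D A S#} (comp_ctx Dc (CBr {#} (add_top {#fitem A Xa#} Q) c))"
  have "weakened_derivable Ac E B (comp_ctx Gr ?K) \<Sigma> \<Delta> b"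
    using IH \<Delta> by (intro weakening_admissibleD) simp_all
  then obtain G' \<Delta>' \<Sigma>' Y where g: "erase_ctx G' = erase_ctx (comp_ctx Gr ?K)"
      "erase_ms \<Delta>' = erase_ms \<Delta>" "\<Sigma>' |\<subseteq>| \<Sigma> |-| {|B|}"
      "der Ac (fill G' {#Br ({#D E \<Sigma>', D (neg B) Y#} + \<Delta>') b#})"
    unfolding weakened_derivable_def by blast
  obtain Gr' H1 where l1: "G' = comp_ctx Gr' H1" "erase_ctx Gr' = erase_ctx Gr"
      "erase_ctx H1 = erase_ctx ?K"
    using lift_comp_ctx[OF g(1)] by blast
  obtain N1 H2 where l2: "H1 = add_top N1 H2" "erase_ms N1 = erase_ms {#D A S#}"
      "erase_ctx H2 = erase_ctx (comp_ctx Dc (CBr {#} (add_top {#fitem A Xa#} Q) c))"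
    using lift_add_top[OF l1(3)] by blast
  obtain S' where l3: "N1 = {#D A S'#}" using lift_single_D l2(2) by auto
  obtain Dc' H3 where l4: "H2 = comp_ctx Dc' H3" "erase_ctx Dc' = erase_ctx Dc"
      "erase_ctx H3 = erase_ctx (CBr {#} (add_top {#fitem A Xa#} Q) c)"
    using lift_comp_ctx[OF l2(3)] by blast
  obtain K H4 where l5: "H3 = CBr K H4 c" "erase_ms K = {#}"
      "erase_ctx H4 = erase_ctx (add_top {#fitem A Xa#} Q)"
    using lift_CBr[OF l4(3)] by auto
  obtain N4 Q' where l6: "H4 = add_top N4 Q'" "erase_ms N4 = erase_ms {#fitem A Xa#}"
      "erase_ctx Q' = erase_ctx Q"
    using lift_add_top[OF l5(3)] by blast
  obtain Xa' where l7: "N4 = {#fitem A Xa'#}" using lift_single_fitem l6(2) by auto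
  let ?y = "Br ({#D E \<Sigma>', D (neg B) Y#} + \<Delta>') b"
  have "der Ac (fill Gr' (add_mset (D A S') (fill Dc' {#Br (add_mset (fitem A Xa')
      (fill Q' {#?y#})) c#})))"
    using g(4) l1(1) l2(1) l3 l4(1) l5 l6(1) l7 by simp
  from der.dia[OF this]
  have d: "der Ac (fill (comp_ctx Gr' (add_top {#D A (finsert c S')#}
      (comp_ctx Dc' (CBr {#} Q' c)))) {#?y#})"
    by simp
  show ?thesis
    by (rule weakened_derivableI[OF _ g(2) g(3) d]) (simp add: l1(2) l4(2) l6(3))
qed

lemma weakened_derivable_dia_beside:
  assumes IH: "weakening_admissible Ac E B (fill Gr (add_mset (D A S)
      (fill (comp_ctx R (add_top (Mx + fill Gb {#Br (add_mset (D E \<Sigma>) \<Delta>) b#}) Cb))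
        {#Br (add_mset (fitem A Xa) M) c#})))"
    and \<Delta>: "bracket_free B \<Delta>"
  shows "weakened_derivable Ac E B (comp_ctx Gr (add_top {#D A (finsert c S)#}
      (comp_ctx R (add_top (Mx + fill Cb {#Br M c#}) Gb)))) \<Sigma> \<Delta> b"
proof -
  let ?K = "add_top {#D A S#}
      (comp_ctx R (add_top (Mx + fill Cb {#Br (add_mset (fitem A Xa) M) c#}) Gb))"
  have "weakened_derivable Ac E B (comp_ctx Gr ?K) \<Sigma> \<Delta> b"
    using IH \<Delta> by (intro weakening_admissibleD) (simp_all add: ac_simps)
  then obtain G' \<Delta>' \<Sigma>' Y where g: "erase_ctx G' = erase_ctx (comp_ctx Gr ?K)"
      "erase_ms \<Delta>' = erase_ms \<Delta>" "\<Sigma>' |\<subseteq>| \<Sigma> |-| {|B|}"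
      "der Ac (fill G' {#Br ({#D E \<Sigma>', D (neg B) Y#} + \<Delta>') b#})"
    unfolding weakened_derivable_def by blast
  obtain Gr' H1 where l1: "G' = comp_ctx Gr' H1" "erase_ctx Gr' = erase_ctx Gr"
      "erase_ctx H1 = erase_ctx ?K"
    using lift_comp_ctx[OF g(1)] by blast
  obtain N1 H2 where l2: "H1 = add_top N1 H2" "erase_ms N1 = erase_ms {#D A S#}"
      "erase_ctx H2 = erase_ctx (comp_ctx R (add_top (Mx + fill
          Cb {#Br (add_mset (fitem A Xa) M) c#}) Gb))"
    using lift_add_top[OF l1(3)] by blast
  obtain S' where l3: "N1 = {#D A S'#}" using lift_single_D l2(2) by auto
  obtain R' H3 where l4: "H2 = comp_ctx R' H3" "erase_ctx R' = erase_ctx R"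
      "erase_ctx H3 = erase_ctx (add_top (Mx + fill Cb {#Br (add_mset (fitem A Xa) M) c#}) Gb)"
    using lift_comp_ctx[OF l2(3)] by blast
  obtain N3 Gb' where l5: "H3 = add_top N3 Gb'"
      "erase_ms N3 = erase_ms (Mx + fill Cb {#Br (add_mset (fitem A Xa) M) c#})"
          "erase_ctx Gb' = erase_ctx Gb"
    using lift_add_top[OF l4(3)] by blast
  obtain Mx' W where l6: "N3 = Mx' + W" "erase_ms Mx' = erase_ms Mx"
      "erase_ms W = erase_ms (fill Cb {#Br (add_mset (fitem A Xa) M) c#})"
    using lift_plus[of N3 "erase_ms Mx"] l5(2) by auto
  obtain Cb' Z where l7: "W = fill Cb' Z" "erase_ctx Cb' = erase_ctx Cb"
      "erase_ms Z = erase_ms {#Br (add_mset (fitem A Xa) M) c#}"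
    using lift_fill[OF l6(3)] by blast
  obtain Xa' M' where l8: "Z = {#Br (add_mset (fitem A Xa') M') c#}" "erase_ms M' = erase_ms M"
    using lift_bracket_fitem[OF l7(3)] by blast
  let ?y = "Br ({#D E \<Sigma>', D (neg B) Y#} + \<Delta>') b"
  have "der Ac (fill Gr' (add_mset (D A S')
      (fill (comp_ctx R' (add_top (Mx' + fill Gb' {#?y#}) Cb'))
      {#Br (add_mset (fitem A Xa') M') c#})))"
    using g(4) l1(1) l2(1) l3 l4(1) l5(1) l6(1) l7(1) l8(1) by (simp add: ac_simps)
  from der.dia[OF this]
  have d: "der Ac (fill (comp_ctx Gr' (add_top {#D A (finsert c S')#}
      (comp_ctx R' (add_top (Mx' + fill Cb' {#Br M' c#}) Gb')))) {#?y#})"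
    by (simp add: ac_simps)
  show ?thesis
    by (rule weakened_derivableI[OF _ g(2) g(3) d]) (simp add: l1(2) l4(2) l5(3) l6(2) l7(2) l8(2))
qed

lemma weakened_derivable_dia_in_conclusion:
  assumes IH: "weakening_admissible Ac E B (fill Gr (add_mset (D A S)
      (fill Dc {#Br (add_mset (fitem A Xa) M) c#})))"
    and eq: "fill Dc {#Br M c#} = fill Q0 {#Br (add_mset (D E \<Sigma>) \<Delta>) b#}"
    and \<Delta>: "bracket_free B \<Delta>"
  shows "weakened_derivable Ac E B (comp_ctx Gr (add_top {#D A (finsert c S)#} Q0)) \<Sigma> \<Delta> b"
  using eq
proof (cases rule: fill_eq_fillE)
  case (hole_in_item Q1 Z b')
  then have Z: "add_mset (D E \<Sigma>) \<Delta> = fill Q1 {#Br M c#}" "b' = b" by simp_all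
  then have "D E \<Sigma> \<in># fill Q1 {#Br M c#}" by (metis union_single_eq_member)
  then obtain Q1' where "Q1 = add_top {#D E \<Sigma>#} Q1'" using mem_fill_cases by fastforce
  moreover from this have "\<Delta> = fill Q1' {#Br M c#}" using Z by simp
  ultimately show ?thesis
    using IH \<Delta> hole_in_item Z(2) weakened_derivable_dia_enclosing by simp
next
  case (item_in_filler Q2)
  show ?thesis
  proof (cases Q2)
    case (Hole N)
    then have "b = c" "M = add_mset (D E \<Sigma>) \<Delta>" "Q0 = Dc" using item_in_filler by auto
    then show ?thesis using weakened_derivable_dia_into_item[OF _ \<Delta>] IH by simp
  next
    case (CBr N Q3 e)
    then have "e = c" "M = fill Q3 {#Br (add_mset (D E \<Sigma>) \<Delta>) b#}" using item_in_filler by auto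
    then show ?thesis
      using weakened_derivable_dia_inside_item[OF _ \<Delta>] IH item_in_filler CBr by auto
  qed
next
  case (disjoint R Mx Cb Gb)
  then show ?thesis using weakened_derivable_dia_beside[OF _ \<Delta>] IH by simp
qed

fun top_empty :: "ctx \<Rightarrow> bool" where
  "top_empty (Hole M) \<longleftrightarrow> M = {#}"
| "top_empty (CBr M C c) \<longleftrightarrow> M = {#}"

lemma add_top_top_empty: "\<exists>K C'. C = add_top K C' \<and> top_empty C'"
proof (cases C)
  case (Hole M)
  then show ?thesis by (intro exI[of _ M] exI[of _ "Hole {#}"]) simp
next
  case (CBr M C' c)
  then show ?thesis by (intro exI[of _ M] exI[of _ "CBr {#} C' c"]) simp
qed

text \<open>With \<open>Dc\<close> top-empty, the only diamond formula at the top level of the active part is the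
  principal one.\<close>
lemma weakening_admissible_dia_top_empty:
  assumes IH: "weakening_admissible Ac E B (fill Gr (add_mset (D A S)
      (fill Dc {#Br (add_mset (fitem A Xa) M) c#})))"
    and top: "top_empty Dc"
  shows "weakening_admissible Ac E B (fill Gr (add_mset (D A (finsert c S)) (fill Dc {#Br M c#})))"
  unfolding weakening_admissible_def
proof (intro allI impI)
  fix G \<Sigma> \<Delta> b
  let ?X = "add_mset (D A (finsert c S)) (fill Dc {#Br M c#})"
  assume eq: "fill Gr ?X = fill G {#Br (add_mset (D E \<Sigma>) \<Delta>) b#}" and \<Delta>: "bracket_free B \<Delta>"
  have free: "bracket_free B (add_mset (D A S) (fill Dc {#Br (add_mset (fitem A Xa) M) c#}))"
    if "bracket_free B ?X"
    using that bracket_free_fill[of B Dc "{#Br (add_mset (fitem A Xa) M) c#}"]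
      bracket_free_fill[of B Dc "{#Br M c#}"] by simp
  from eq show "weakened_derivable Ac E B G \<Sigma> \<Delta> b"
  proof (cases rule: fill_eq_fillE)
    case (hole_in_item Q Z b')
    then have Z: "add_mset (D E \<Sigma>) \<Delta> = fill Q ?X" "b' = b" by simp_all
    then have "D E \<Sigma> \<in># fill Q ?X" by (metis union_single_eq_member)
    then consider Q' where "Q = add_top {#D E \<Sigma>#} Q'" | N where "Q = Hole N" "D E \<Sigma> \<in># ?X"
      using mem_fill_cases by fastforce
    then show ?thesis
    proof cases
      case 1
      then have "Gr = comp_ctx G (CBr {#} (add_top {#D E \<Sigma>#} Q') b)" "\<Delta> = fill Q' ?X"
        using hole_in_item Z by simp_all
      then show ?thesis using weakened_derivable_inference1_in_item[OF IH inference1_dia free] \<Delta>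
        by blast
    next
      case 2
      moreover obtain W c' where "fill Dc {#Br M c#} = {#Br W c'#}" using top by (cases Dc) auto
      ultimately have "E = A" "\<Sigma> = finsert c S" "\<Delta> = N + fill Dc {#Br M c#}" using Z by auto
      then show ?thesis
        using IH \<Delta> hole_in_item Z(2) 2 weakened_derivable_dia_principal by (simp add: ac_simps)
    qed
  next
    case (item_in_filler Qb)
    then have "D A (finsert c S) \<in># fill Qb {#Br (add_mset (D E \<Sigma>) \<Delta>) b#}"
      by (metis union_single_eq_member)
    then obtain Q0 where "Qb = add_top {#D A (finsert c S)#} Q0" using mem_fill_cases by fastforce
    with item_in_filler IH \<Delta> show ?thesis using weakened_derivable_dia_in_conclusion by simp
  next
    case (disjoint R Mx Cb Gb)
    then show ?thesis using weakened_derivable_inference1_disjoint[OF IH inference1_dia _ \<Delta>] by simp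
  qed
qed

lemma weakening_admissible_dia:
  assumes "weakening_admissible Ac E B (fill Gr (add_mset (D A S)
      (fill Dc {#Br (add_mset (fitem A Xa) M) c#})))"
  shows "weakening_admissible Ac E B (fill Gr (add_mset (D A (finsert c S)) (fill Dc {#Br M c#})))"
proof -
  obtain K Dc' where "Dc = add_top K Dc'" "top_empty Dc'" using add_top_top_empty by blast
  with assms weakening_admissible_dia_top_empty[of Ac E B "comp_ctx Gr (Hole K)" A S Dc' Xa M c]
  show ?thesis by (simp add: ac_simps)
qed

lemma inference1_disj: "inference1 Ac {#fitem A X, fitem B Y#} {#F (Or A B)#}"
  unfolding inference1_def
proof (intro allI impI)
  fix X1' assume "erase_ms X1' = erase_ms {#fitem A X, fitem B Y#}"
  then have "erase_ms X1' = add_mset (fitem A {||}) {#fitem B {||}#}" by simp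
  then obtain w W where w: "X1' = add_mset w W" "erase w = fitem A {||}"
      "erase_ms W = {#fitem B {||}#}"
    using lift_add_mset by metis
  obtain X' Y' where "X1' = {#fitem A X', fitem B Y'#}"
    using w erase_eq_fitem[OF w(2)] lift_single_fitem[OF w(3)] by blast
  then show "\<exists>X'. erase_ms X' = erase_ms {#F (Or A B)#} \<and> (\<forall>C. der Ac (fill C X1') \<longrightarrow>
      der Ac (fill C X'))"
    by (intro exI[of _ "{#F (Or A B)#}"]) (auto intro: der.disj)
qed

lemma inference1_box: "inference1 Ac {#Br {#D (neg A) \<Sigma>, fitem A X#} A#} {#F (Box A)#}"
  unfolding inference1_def
proof (intro allI impI)
  fix X1' assume "erase_ms X1' = erase_ms {#Br {#D (neg A) \<Sigma>, fitem A X#} A#}"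
  then obtain w where w: "X1' = {#w#}" "erase w = Br {#D (neg A) {||}, fitem A {||}#} A"
    by (auto dest!: lift_add_mset)
  then obtain N where N: "w = Br N A" "erase_ms N = add_mset (D (neg A) {||}) {#fitem A {||}#}"
    using erase_eq_Br by metis
  then obtain u U where u: "N = add_mset u U" "erase u = D (neg A) {||}"
      "erase_ms U = {#fitem A {||}#}"
    using lift_add_mset by metis
  obtain \<Sigma>' X' where "X1' = {#Br {#D (neg A) \<Sigma>', fitem A X'#} A#}"
    using w N u erase_eq_D[OF u(2)] lift_single_fitem[OF u(3)] by blast
  then show "\<exists>X'. erase_ms X' = erase_ms {#F (Box A)#} \<and> (\<forall>C. der Ac (fill C X1') \<longrightarrow>
      der Ac (fill C X'))"
    by (intro exI[of _ "{#F (Box A)#}"]) (auto intro: der.box)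
qed

lemma inference2_conj: "inference2 Ac {#fitem A X#} {#fitem B Y#} {#F (And A B)#}"
  unfolding inference2_def
proof (intro allI impI)
  fix X1' X2' assume "erase_ms X1' = erase_ms {#fitem A X#}" "erase_ms X2' = erase_ms {#fitem B Y#}"
  then obtain X' Y' where "X1' = {#fitem A X'#}" "X2' = {#fitem B Y'#}"
    using lift_single_fitem by (metis erase_fitem image_mset_single)
  then show "\<exists>Z. erase_ms Z = erase_ms {#F (And A B)#} \<and> (\<forall>C1 C2 C. der Ac (fill C1 X1') \<longrightarrow>
      der Ac (fill C2 X2') \<longrightarrow> merge_ctx C1 C2 C \<longrightarrow> der Ac (fill C Z))"
    by (intro exI[of _ "{#F (And A B)#}"]) (auto intro: der.conj)
qed

lemma inference2_cut: "inference2 Ac {#fitem Ac X#} {#fitem (neg Ac) Y#} {#}"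
  unfolding inference2_def
proof (intro allI impI)
  fix X1' X2' assume "erase_ms X1' = erase_ms {#fitem Ac X#}"
      "erase_ms X2' = erase_ms {#fitem (neg Ac) Y#}"
  then obtain X' Y' where "X1' = {#fitem Ac X'#}" "X2' = {#fitem (neg Ac) Y'#}"
    using lift_single_fitem by (metis erase_fitem image_mset_single)
  then show "\<exists>Z. erase_ms Z = erase_ms {#} \<and> (\<forall>C1 C2 C. der Ac (fill C1 X1') \<longrightarrow>
      der Ac (fill C2 X2') \<longrightarrow> merge_ctx C1 C2 C \<longrightarrow> der Ac (fill C Z))"
    by (intro exI[of _ "{#}"]) (auto intro: der.cut)
qed

lemma fill_add_into_bracket:
  assumes "fill C X = fill G {#Br Z b#}" "set_mset X \<subseteq> range F"
  shows "\<exists>C'. fill G {#Br (add_mset w Z) b#} = fill C' X"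
  using assms(1)
proof (cases rule: fill_eq_fillE)
  case (hole_in_item Q Z' c)
  then show ?thesis by (intro exI[of _ "comp_ctx G (CBr {#} (add_top {#w#} Q) b)"]) simp
next
  case (item_in_filler Q)
  then have "\<exists>M c. Br M c \<in># X" using fill_singleton_has_bracket by metis
  with assms(2) show ?thesis by auto
next
  case (disjoint R M Cb Gb)
  then show ?thesis
    by (intro exI[of _ "comp_ctx R (add_top (M + fill Gb {#Br (add_mset w Z) b#}) Cb)"])
      (simp add: ac_simps)
qed

lemma weakening_admissible_ax:
  assumes "wf_unannotated (fill C {#F (NAt a), F (At a)#})"
  shows "weakening_admissible Ac E B (fill C {#F (NAt a), F (At a)#})"
  unfolding weakening_admissible_def
proof (intro allI impI)
  fix G \<Sigma> \<Delta> b
  assume eq: "fill C {#F (NAt a), F (At a)#} = fill G {#Br (add_mset (D E \<Sigma>) \<Delta>) b#}"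
  have wu: "wf_unannotated (fill G {#Br (add_mset (D E \<Sigma>) \<Delta>) b#})" using assms eq by simp
  then have \<Sigma>: "\<Sigma> = {||}" by simp
  obtain C' where C': "fill G {#Br (add_mset (D (neg B) {||}) (add_mset (D E \<Sigma>) \<Delta>)) b#} =
      fill C' {#F (NAt a), F (At a)#}"
    using fill_add_into_bracket[OF eq] by auto
  have "wf_unannotated (fill C' {#F (NAt a), F (At a)#})"
    unfolding C'[symmetric] using wu by simp
  then have "der Ac (fill C' {#F (NAt a), F (At a)#})"
    by (intro der.ax[OF refl]) (auto simp: wf_unannotated_def)
  then have d: "der Ac (fill G {#Br ({#D E {||}, D (neg B) {||}#} + \<Delta>) b#})"
    using C' \<Sigma> by (simp add: add_mset_commute)
  show "weakened_derivable Ac E B G \<Sigma> \<Delta> b"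
    by (rule weakened_derivableI[OF refl refl _ d]) simp
qed

text \<open>When the displayed bracket contains \<open>\<box>B\<close>, the weakened sequent has a derivation of its
  own: \<open>\<diamond>\<not>B\<close> enters the bracket \<open>[\<diamond>\<not>B, B]\<^sub>B\<close> of the \<open>\<box>\<close>-rule, which closes by the
  generalised identity.\<close>
lemma weakened_derivable_Box_same:
  assumes wf: "\<forall>i\<in>#fill G {#Br (add_mset (D E \<Sigma>) (fill Q {#F (Box B)#})) b#}. wf_item i"
  shows "weakened_derivable Ac E B G \<Sigma> (fill Q {#F (Box B)#}) b"
proof -
  let ?G = "erase_ctx G" and ?Q = "erase_ctx Q"
  let ?K = "comp_ctx ?G (CBr {#} (add_top {#D E {||}, D (neg B) {||}#}
              (comp_ctx ?Q (CBr {#} (Hole {#D (neg B) {||}#}) B))) b)"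
  have "\<forall>i\<in>#fill G {#}. wf_item i" "\<forall>i\<in>#fill Q {#}. wf_item i" using wf by simp_all
  then have "wf_unannotated (fill ?G {#})" "wf_unannotated (fill ?Q {#})"
    using wf_unannotated_erase[of "fill G {#}"] wf_unannotated_erase[of "fill Q {#}"] by simp_all
  then have "wf_unannotated (fill ?K {#})" by simp
  then obtain X Y where "der Ac (fill ?K {#fitem B X, fitem (neg B) Y#})"
    using der_identity by blast
  then have "der Ac (fill (comp_ctx ?G (CBr {#} (Hole {#D E {||}#}) b)) (add_mset (D (neg B) {||})
      (fill ?Q {#Br (add_mset (fitem (neg B) Y) {#D (neg B) {||}, fitem B X#}) B#})))"
    by (simp add: ac_simps add_mset_commute)
  from der.dia[OF this]
  have "der Ac (fill (comp_ctx ?G (CBr {#} (add_top {#D E {||}, D (neg B) {|B|}#} ?Q) b))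
      {#Br {#D (neg B) {||}, fitem B X#} B#})"
    by (simp add: ac_simps add_mset_commute)
  from der.box[OF this]
  have d: "der Ac (fill ?G {#Br ({#D E {||}, D (neg B) {|B|}#} + fill ?Q {#F (Box B)#}) b#})"
    by simp
  show ?thesis
    by (rule weakened_derivableI[OF erase_ctx_idem _ _ d]) simp_all
qed

lemma weakening_admissible_box:
  assumes IH: "weakening_admissible Ac E B (fill C {#Br {#D (neg A) \<Sigma>, fitem A X#} A#})"
    and der: "der Ac (fill C {#F (Box A)#})"
  shows "weakening_admissible Ac E B (fill C {#F (Box A)#})"
proof (cases "A = B")
  case False
  then show ?thesis by (intro weakening_admissible_inference1[OF IH inference1_box]) simp
next
  case True
  show ?thesis
    unfolding weakening_admissible_def
  proof (intro allI impI)
    fix G \<Sigma>' \<Delta> b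
    assume eq: "fill C {#F (Box A)#} = fill G {#Br (add_mset (D E \<Sigma>') \<Delta>) b#}"
      and \<Delta>: "bracket_free B \<Delta>"
    from eq show "weakened_derivable Ac E B G \<Sigma>' \<Delta> b"
    proof (cases rule: fill_eq_fillE)
      case (hole_in_item Q Z c)
      then have Z: "add_mset (D E \<Sigma>') \<Delta> = fill Q {#F (Box A)#}" "c = b" by simp_all
      then have "D E \<Sigma>' \<in># fill Q {#F (Box A)#}" by (metis union_single_eq_member)
      then obtain Q' where "Q = add_top {#D E \<Sigma>'#} Q'" using mem_fill_cases by fastforce
      moreover have "\<forall>i\<in>#fill G {#Br (add_mset (D E \<Sigma>') \<Delta>) b#}. wf_item i"
        using der_wf[OF der] eq by simp
      ultimately show ?thesis using Z True weakened_derivable_Box_same by simp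
    next
      case (item_in_filler Q)
      then have "\<exists>M c. Br M c \<in># {#F (Box A)#}" using fill_singleton_has_bracket by metis
      then show ?thesis by simp
    next
      case (disjoint R M Cb Gb)
      with \<Delta> show ?thesis
        by (auto intro: weakened_derivable_inference1_disjoint[OF IH inference1_box])
    qed
  qed
qed

lemma der_weakening_admissible: "der Ac S \<Longrightarrow> weakening_admissible Ac E B S"
proof (induction rule: der.induct)
  case (ax S C a)
  then show ?case using weakening_admissible_ax[of C a] by (simp add: wf_unannotated_def)
next
  case (conj C1 A X C2 B' Y C)
  then show ?case by (intro weakening_admissible_inference2[OF _ _ inference2_conj]) simp_all
next
  case (disj C A X B' Y)
  then show ?case by (intro weakening_admissible_inference1[OF _ inference1_disj]) simp_all
next
  case (box C A \<Sigma> X)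
  then show ?case by (intro weakening_admissible_box der.box)
next
  case (dia G A \<Sigma> Dc X M b)
  from dia.IH show ?case by (rule weakening_admissible_dia)
next
  case (cut C1 X C2 Y C)
  then show ?case by (intro weakening_admissible_inference2[OF _ _ inference2_cut]) simp_all
qed

theorem mainTheorem7:
  fixes A B b :: fm and G :: ctx and \<Delta> :: seq and \<Sigma> :: "fm fset"
  assumes "der A (fill G {#Br (add_mset (D (neg A) \<Sigma>) \<Delta>) b#})"
    and "B |\<in>| \<Sigma>"
    and "\<forall>i\<in>#\<Delta>. B \<notin> banns i"
  shows "\<exists>G' \<Delta>' \<Sigma>' X. erase_ctx G' = erase_ctx G \<and> image_mset erase \<Delta>' = image_mset erase \<Delta> \<and>
           \<Sigma>' |\<subseteq>| \<Sigma> |-| {|B|} \<and>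
           der A (fill G' {#Br ({#D (neg A) \<Sigma>', D (neg B) X#} + \<Delta>') b#})"
proof -
  have "weakening_admissible A (neg A) B (fill G {#Br (add_mset (D (neg A) \<Sigma>) \<Delta>) b#})"
    using assms(1) by (rule der_weakening_admissible)
  moreover have "bracket_free B \<Delta>" using assms(3) by (simp add: bracket_free_def)
  ultimately have "weakened_derivable A (neg A) B G \<Sigma> \<Delta> b" by (rule weakening_admissibleD)
  then show ?thesis unfolding weakened_derivable_def by simp
qed

end
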